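(* For every $\varepsilon>0$ there exists a finite family $\mathcal{S}$ of line segments in the plane whose intersection graph is triangle-free and has the property that every independent set of this intersection graph has size at most $\varepsilon\cdot|\mathcal{S}|$.
   Context: The intersection graph of a finite family of line segments in the plane has one vertex per segment, with two vertices adjacent if and only if the corresponding segments intersect. A graph is triangle-free if it contains no three pairwise adjacent vertices. An independent set is a set of pairwise non-adjacent vertices. *)

theory Defs
  imports "HOL-Analysis.Analysis"
begin

definition is_segment :: "(real^2) set \<Rightarrow> bool" where
  "is_segment s \<longleftrightarrow> (\<exists>a b. a \<noteq> b \<and> s = closed_segment a b)"

definition seg_adj :: "(real^2) set \<Rightarrow> (real^2) set \<Rightarrow> bool" where
  "seg_adj s t \<longleftrightarrow> s \<noteq> t \<and> s \<inter> t \<noteq> {}"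

definition triangle_free_ig :: "(real^2) set set \<Rightarrow> bool" where
  "triangle_free_ig S \<longleftrightarrow>
     \<not> (\<exists>x\<in>S. \<exists>y\<in>S. \<exists>z\<in>S. seg_adj x y \<and> seg_adj y z \<and> seg_adj x z)"

definition independent_ig :: "(real^2) set set \<Rightarrow> (real^2) set set \<Rightarrow> bool" where
  "independent_ig S I \<longleftrightarrow> I \<subseteq> S \<and> (\<forall>x\<in>I. \<forall>y\<in>I. \<not> seg_adj x y)"

end

theory Submission
  imports Defs
begin

text \<open>
  The construction works with families of segments in the unit square together with probes:
  horizontal strips \<open>[x_lo, 1] \<times> [y_lo, y_hi]\<close> crossed from left to right by pairwise disjoint
  segments of the family, all of which stay to the right of \<open>x_mid\<close> inside the strip. A family
  is good at level \<open>n\<close> with multiplier \<open>k\<close> if \<open>2 |F| = (n + 2) k |P|\<close> and every independent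
  set \<open>I\<close> satisfies \<open>|I| \<le> k \<cdot> #{probes met by I}\<close>, hence \<open>|I| \<le> 2 |F| / (n + 2)\<close>.

  Level \<open>n + 1\<close> is built from a family \<open>(F0, P0)\<close> with multiplier \<open>k |P|\<close> and a family \<open>(F, P)\<close>
  with multiplier \<open>k\<close>, both of level \<open>n\<close>: into the free left part of every probe \<open>R\<close> of \<open>P0\<close>
  put a scaled copy of \<open>F\<close>, and for every probe \<open>Q\<close> of that copy add \<open>k\<close> parallel diagonals
  crossing exactly the copied segments that hit \<open>Q\<close>. These are pairwise disjoint, so no triangle
  arises. The new probes are the upper half of \<open>Q\<close> (met by \<open>F0\<close> and the copy) and a thin strip
  met by \<open>F0\<close> and the diagonals. An independent set cannot contain both a diagonal of \<open>Q\<close> and a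
  copied segment hitting \<open>Q\<close>; this pays for the \<open>k\<close> diagonals and keeps the invariant.
\<close>

type_synonym pt = "real \<times> real"

definition rect :: "real \<Rightarrow> real \<Rightarrow> real \<Rightarrow> real \<Rightarrow> pt set" where
  "rect x0 x1 y0 y1 = {p. x0 \<le> fst p \<and> fst p \<le> x1 \<and> y0 \<le> snd p \<and> snd p \<le> y1}"

lemma mem_closed_segment_pair:
  "(p::pt) \<in> closed_segment a b \<longleftrightarrow>
   (\<exists>u. 0 \<le> u \<and> u \<le> 1 \<and> fst p = (1-u) * fst a + u * fst b \<and> snd p = (1-u) * snd a + u * snd b)"
  unfolding in_segment by (auto simp: prod_eq_iff)

lemma convex_rect: "convex (rect x0 x1 y0 y1)"
proof -
  have lower: "x0 \<le> u * a + v * b"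
    if "x0 \<le> a" "x0 \<le> b" "0 \<le> u" "0 \<le> v" "u + v = 1" for x0 a b u v :: real
    using convex_bound_le[of "-a" "-x0" "-b" u v] that by simp
  show ?thesis
    unfolding convex_def rect_def by (auto intro!: convex_bound_le lower)
qed

lemma closed_segment_subset_rect:
  "a \<in> rect x0 x1 y0 y1 \<Longrightarrow> b \<in> rect x0 x1 y0 y1 \<Longrightarrow> closed_segment a b \<subseteq> rect x0 x1 y0 y1"
  by (simp add: closed_segment_subset convex_rect)

definition axis_affine :: "real \<Rightarrow> real \<Rightarrow> real \<Rightarrow> real \<Rightarrow> pt \<Rightarrow> pt" where
  "axis_affine a b c d p = (a + b * fst p, c + d * snd p)"

lemma axis_affine_closed_segment:
  "axis_affine a b c d ` closed_segment p q
      = closed_segment (axis_affine a b c d p) (axis_affine a b c d q)"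
proof -
  define L where "L p = (b * fst p, d * snd p)" for p :: pt
  have "linear L" unfolding L_def by (rule linearI) (auto simp: algebra_simps)
  have eq: "axis_affine a b c d = (\<lambda>x. (a, c) + x) \<circ> L" by (auto simp: axis_affine_def L_def)
  have "axis_affine a b c d ` closed_segment p q = (\<lambda>x. (a, c) + x) ` L ` closed_segment p q"
    by (simp add: eq image_comp)
  also have "\<dots> = closed_segment (axis_affine a b c d p) (axis_affine a b c d q)"
    by (simp add: closed_segment_linear_image[OF \<open>linear L\<close>, symmetric]
        closed_segment_translation eq)
  finally show ?thesis .
qed

lemma inj_axis_affine: "b \<noteq> 0 \<Longrightarrow> d \<noteq> 0 \<Longrightarrow> inj (axis_affine a b c d)"
  by (auto simp: inj_def axis_affine_def prod_eq_iff)

lemma closed_segments_cross: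
  fixes x1 x2 x1' x2' y1 y2 :: real
  assumes "x1 < x1'" "x2' < x2"
  shows "closed_segment (x1', y1) (x2', y2) \<inter> closed_segment (x1, y1) (x2, y2) \<noteq> {}"
proof -
  define u where "u = (x1' - x1) / ((x1' - x1) + (x2 - x2'))"
  have u: "0 \<le> u" "u \<le> 1" using assms by (auto simp: u_def field_simps)
  have "(1-u) * x1' + u * x2' = (1-u) * x1 + u * x2"
    using assms by (simp add: u_def field_simps)
  then have "((1-u) * x1' + u * x2', (1-u) * y1 + u * y2)
      \<in> closed_segment (x1', y1) (x2', y2) \<inter> closed_segment (x1, y1) (x2, y2)"
    unfolding Int_iff mem_closed_segment_pair using u by (metis fst_conv snd_conv)
  then show ?thesis by blast
qed

definition triangle_free :: "'a set set \<Rightarrow> bool" where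
  "triangle_free F \<longleftrightarrow> \<not> (\<exists>x\<in>F. \<exists>y\<in>F. \<exists>z\<in>F. x \<noteq> y \<and> y \<noteq> z \<and> x \<noteq> z \<and>
      x \<inter> y \<noteq> {} \<and> y \<inter> z \<noteq> {} \<and> x \<inter> z \<noteq> {})"

lemma triangle_free_image:
  assumes "inj f" "triangle_free F"
  shows "triangle_free ((`) f ` F)"
  using assms unfolding triangle_free_def
  by (auto simp: image_Int[OF assms(1), symmetric] inj_image_eq_iff[OF assms(1)])

lemma pairwise_disjnt_image_iff:
  assumes "inj f"
  shows "pairwise disjnt ((`) f ` G) \<longleftrightarrow> pairwise disjnt G"
  using assms
  by (auto simp: pairwise_def disjnt_def image_Int[OF assms, symmetric] inj_image_eq_iff)

lemma pairwise_disjnt_Un: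
  "pairwise disjnt A \<Longrightarrow> pairwise disjnt B \<Longrightarrow> (\<forall>a\<in>A. \<forall>b\<in>B. a \<inter> b = {}) \<Longrightarrow> pairwise disjnt (A \<union> B)"
  unfolding pairwise_def disjnt_def by (metis Int_commute Un_iff)

lemma disjoint_families: "(\<And>s t. s \<in> A \<Longrightarrow> t \<in> B \<Longrightarrow> s \<inter> t = {}) \<Longrightarrow> {} \<notin> A \<Longrightarrow> A \<inter> B = {}"
  by (metis Int_absorb disjoint_iff)

lemma card_filter_add_le:
  assumes "finite X" "\<And>x. x \<in> X \<Longrightarrow> C x \<Longrightarrow> \<not> B x"
  shows "card {x\<in>X. A x} + card {x\<in>X. B x} + card {x\<in>X. C x}
    \<le> card {x\<in>X. A x \<or> B x} + card {x\<in>X. A x \<or> C x}"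
proof -
  have card_eq: "card {x\<in>X. D x} = (\<Sum>x\<in>X. if D x then 1 else 0)" for D
    using assms(1) by (simp add: sum.If_cases Int_def)
  show ?thesis
    unfolding card_eq sum.distrib[symmetric] by (rule sum_mono) (use assms(2) in auto)
qed

record probe =
  x_lo :: real
  x_mid :: real
  y_lo :: real
  y_hi :: real

definition probe_region :: "probe \<Rightarrow> pt set" where
  "probe_region Z = rect (x_lo Z) 1 (y_lo Z) (y_hi Z)"

definition hitting :: "pt set set \<Rightarrow> probe \<Rightarrow> pt set set" where
  "hitting F Z = {s\<in>F. s \<inter> probe_region Z \<noteq> {}}"

locale probed_family =
  fixes F :: "pt set set" and P :: "probe set" and k n :: nat
  assumes finite_F: "finite F" and finite_P: "finite P" and P_nonempty: "P \<noteq> {}"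
    and segment: "s \<in> F \<Longrightarrow> \<exists>a b. a \<noteq> b \<and> s = closed_segment a b"
    and in_unit_square: "s \<in> F \<Longrightarrow> s \<subseteq> rect 0 1 0 1"
    and triangle_free: "triangle_free F"
    and probe_bounds: "Z \<in> P \<Longrightarrow>
      0 \<le> x_lo Z \<and> x_lo Z < x_mid Z \<and> x_mid Z \<le> 1 \<and> 0 \<le> y_lo Z \<and> y_lo Z < y_hi Z \<and> y_hi Z \<le> 1"
    and probes_apart: "Z \<in> P \<Longrightarrow> Z' \<in> P \<Longrightarrow> Z \<noteq> Z' \<Longrightarrow> y_hi Z < y_lo Z' \<or> y_hi Z' < y_lo Z"
    and crosses: "Z \<in> P \<Longrightarrow> s \<in> hitting F Z \<Longrightarrow> y_lo Z \<le> y \<Longrightarrow> y \<le> y_hi Z \<Longrightarrow>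
      \<exists>x. x_mid Z \<le> x \<and> x \<le> 1 \<and> (x, y) \<in> s"
    and right_of_mid: "Z \<in> P \<Longrightarrow> s \<in> hitting F Z \<Longrightarrow> p \<in> s \<Longrightarrow> p \<in> probe_region Z \<Longrightarrow> x_mid Z \<le> fst p"
    and hitting_disjoint: "Z \<in> P \<Longrightarrow> pairwise disjnt (hitting F Z)"
    and card_F: "2 * card F = (n + 2) * k * card P"
    and independent_bound: "I \<subseteq> F \<Longrightarrow> pairwise disjnt I
        \<Longrightarrow> card I \<le> k * card {Z\<in>P. hitting F Z \<inter> I \<noteq> {}}"

lemma probed_family_level_0:
  assumes "0 < k"
  shows "\<exists>F P. probed_family F P k 0"
proof -
  define x where "x j = 1/2 + real j / (4 * real k)" for j :: nat
  define s where "s j = closed_segment (x j, 0::real) (x j, 1)" for j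
  define F where "F = s ` {..<k}"
  define Z :: probe where "Z = \<lparr>x_lo = 0, x_mid = 1/4, y_lo = 0, y_hi = 1\<rparr>"
  have x_bounds: "1/2 \<le> x j \<and> x j < 3/4" if "j < k" for j
  proof -
    have "real j / (4 * real k) < 1/4" using that assms by (simp add: field_simps)
    then show ?thesis unfolding x_def by simp
  qed
  have x_inj: "x i = x j \<Longrightarrow> i = j" for i j using assms by (auto simp: x_def field_simps)
  have mem_s: "p \<in> s j \<longleftrightarrow> fst p = x j \<and> 0 \<le> snd p \<and> snd p \<le> 1" for p j
    unfolding s_def mem_closed_segment_pair by (auto simp: algebra_simps intro: exI[of _ "snd p"])
  have disjoint: "pairwise disjnt F"
    unfolding F_def pairwise_def disjnt_def using x_inj by (auto simp: mem_s)
  have "(x j, 0) \<in> s j" for j by (simp add: mem_s)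
  then have "inj_on s {..<k}"
    by (metis disjoint_iff inj_onI mem_s x_inj)
  then have card: "card F = k" unfolding F_def by (simp add: card_image)
  have hitting_all: "hitting F Z = F"
  proof -
    have "(x j, 0) \<in> s j \<inter> probe_region Z" if "j < k" for j
      using x_bounds[OF that] by (simp add: mem_s probe_region_def rect_def Z_def)
    then show ?thesis unfolding hitting_def F_def by blast
  qed
  have "probed_family F {Z} k 0"
  proof
    show "\<exists>a b. a \<noteq> b \<and> t = closed_segment a b" if "t \<in> F" for t
      using that unfolding F_def s_def by force
    show "t \<subseteq> rect 0 1 0 1" if "t \<in> F" for t
      using that x_bounds by (force simp: F_def mem_s rect_def)
    show "triangle_free F"
      using disjoint unfolding triangle_free_def pairwise_def disjnt_def by blast
    show "\<exists>x'. x_mid Z' \<le> x' \<and> x' \<le> 1 \<and> (x', y) \<in> t"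
      if "Z' \<in> {Z}" "t \<in> hitting F Z'" "y_lo Z' \<le> y" "y \<le> y_hi Z'" for Z' t y
      using that x_bounds hitting_all by (force simp: F_def Z_def mem_s)
    show "x_mid Z' \<le> fst p" if "Z' \<in> {Z}" "t \<in> hitting F Z'" "p \<in> t" "p \<in> probe_region Z'"
      for Z' t p
      using that x_bounds hitting_all by (force simp: F_def Z_def mem_s)
    show "card I \<le> k * card {Z' \<in> {Z}. hitting F Z' \<inter> I \<noteq> {}}" if "I \<subseteq> F" for I
    proof -
      have "card I \<le> k" using that card by (metis card_mono finite_imageI F_def finite_lessThan)
      moreover have "I = {} \<or> {Z' \<in> {Z}. hitting F Z' \<inter> I \<noteq> {}} = {Z}" using that hitting_all
        by auto
      ultimately show ?thesis by auto
    qed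
  qed (use disjoint hitting_all card in \<open>auto simp: F_def Z_def\<close>)
  then show ?thesis by blast
qed

definition slot_width :: "probe \<Rightarrow> real" where
  "slot_width R = (x_mid R - x_lo R) / 4"

definition height :: "probe \<Rightarrow> real" where
  "height R = y_hi R - y_lo R"

lemma x_mid_eq: "x_mid R = x_lo R + 4 * slot_width R"
  by (simp add: slot_width_def field_simps)

lemma y_hi_eq: "y_hi R = y_lo R + height R"
  by (simp add: height_def)

text \<open>The unit square is mapped onto \<open>[x_lo R, x_lo R + slot_width R] \<times> [y_lo R, y_hi R]\<close>,
  the leftmost quarter of the free part of the region of \<open>R\<close>.\<close>
definition into_slot :: "probe \<Rightarrow> pt \<Rightarrow> pt" where
  "into_slot R = axis_affine (x_lo R) (slot_width R) (y_lo R) (height R)"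

definition copy_into :: "probe \<Rightarrow> pt set set \<Rightarrow> pt set set" where
  "copy_into R G = (`) (into_slot R) ` G"

definition placed :: "probe \<Rightarrow> probe \<Rightarrow> probe" where
  "placed R Q = \<lparr>x_lo = x_lo R + slot_width R * x_lo Q, x_mid = x_lo R + slot_width R * x_mid Q,
     y_lo = y_lo R + height R * y_lo Q, y_hi = y_lo R + height R * y_hi Q\<rparr>"

text \<open>For every probe \<open>Q\<close> of the copy in the slot of \<open>R\<close>, \<open>k\<close> parallel segments descend from the left
  edge of \<open>placed R Q\<close> to the vertical line \<open>diag_right_x R\<close>, crossing every copied segment that
  hits \<open>Q\<close> inside the free part of \<open>placed R Q\<close>.\<close>
definition diag_right_y :: "nat \<Rightarrow> probe \<Rightarrow> probe \<Rightarrow> nat \<Rightarrow> real" where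
  "diag_right_y k R Q j =
     y_lo (placed R Q) + height (placed R Q) / 8 + real j * height (placed R Q) / (48 * real k)"

definition diag_left_y :: "nat \<Rightarrow> probe \<Rightarrow> probe \<Rightarrow> nat \<Rightarrow> real" where
  "diag_left_y k R Q j = diag_right_y k R Q j + height (placed R Q) / 4"

definition diag_right_x :: "probe \<Rightarrow> real" where
  "diag_right_x R = x_lo R + 3 * slot_width R"

definition diagonal :: "nat \<Rightarrow> probe \<Rightarrow> probe \<Rightarrow> nat \<Rightarrow> pt set" where
  "diagonal k R Q j =
     closed_segment (x_lo (placed R Q), diag_left_y k R Q j) (diag_right_x R, diag_right_y k R Q j)"

definition diagonals :: "nat \<Rightarrow> probe \<Rightarrow> probe \<Rightarrow> pt set set" where
  "diagonals k R Q = diagonal k R Q ` {..<k}"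

definition upper_probe :: "probe \<Rightarrow> probe \<Rightarrow> probe" where
  "upper_probe R Q = \<lparr>x_lo = x_lo (placed R Q), x_mid = x_mid (placed R Q),
     y_lo = y_lo (placed R Q) + height (placed R Q) / 2, y_hi = y_hi (placed R Q)\<rparr>"

text \<open>A thin strip crossed by all diagonals of \<open>placed R Q\<close> and by nothing from the copies.\<close>
definition diagonal_probe :: "probe \<Rightarrow> probe \<Rightarrow> probe" where
  "diagonal_probe R Q = \<lparr>x_lo = x_lo R + 2 * slot_width R, x_mid = x_lo R + 5/2 * slot_width R,
     y_lo = y_lo (placed R Q) + height (placed R Q) / 8 + height (placed R Q) / 48,
     y_hi = y_lo (placed R Q) + height (placed R Q) / 8 + height (placed R Q) / 24\<rparr>"

definition next_family ::
    "pt set set \<Rightarrow> probe set \<Rightarrow> pt set set \<Rightarrow> probe set \<Rightarrow> nat \<Rightarrow> pt set set" where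
  "next_family F0 P0 F P k =
     F0 \<union> (\<Union>R\<in>P0. copy_into R F) \<union> (\<Union>(R, Q)\<in>P0 \<times> P. diagonals k R Q)"

definition next_probes :: "probe set \<Rightarrow> probe set \<Rightarrow> probe set" where
  "next_probes P0 P = case_prod upper_probe ` (P0 \<times> P) \<union> case_prod diagonal_probe ` (P0 \<times> P)"

lemma mem_region_upper:
  "p \<in> probe_region (upper_probe R Q) \<longleftrightarrow> x_lo (placed R Q) \<le> fst p \<and> fst p \<le> 1 \<and>
     y_lo (placed R Q) + height (placed R Q) / 2 \<le> snd p \<and> snd p \<le> y_hi (placed R Q)"
  by (simp add: probe_region_def rect_def upper_probe_def)

lemma mem_region_diagonal:
  "p \<in> probe_region (diagonal_probe R Q) \<longleftrightarrow> x_lo R + 2 * slot_width R \<le> fst p \<and> fst p \<le> 1 \<and>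
     y_lo (placed R Q) + height (placed R Q) / 8 + height (placed R Q) / 48 \<le> snd p \<and>
     snd p \<le> y_lo (placed R Q) + height (placed R Q) / 8 + height (placed R Q) / 24"
  by (simp add: probe_region_def rect_def diagonal_probe_def)

lemma mem_probe_region:
  "p \<in> probe_region R \<longleftrightarrow> x_lo R \<le> fst p \<and> fst p \<le> 1 \<and> y_lo R \<le> snd p \<and> snd p \<le> y_hi R"
  by (simp add: probe_region_def rect_def)

text \<open>\<open>F0\<close> carries multiplier \<open>card P * k\<close> so that it can pay for the \<open>k\<close> diagonals added for
  each pair of probes \<open>R \<in> P0\<close>, \<open>Q \<in> P\<close>.\<close>
locale probed_step =
  F0: probed_family F0 P0 "card P * k" n + probed_family F P k n
  for F0 P0 F P k n +
  assumes k_pos: "0 < k"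
begin

lemmas finite_parts = F0.finite_F F0.finite_P finite_F finite_P F0.P_nonempty P_nonempty

lemma slot_width_pos: "R \<in> P0 \<Longrightarrow> 0 < slot_width R"
  using F0.probe_bounds[of R] by (simp add: slot_width_def field_simps)

lemma height_pos: "R \<in> P0 \<Longrightarrow> 0 < height R"
  using F0.probe_bounds[of R] by (simp add: height_def)

lemma placed_bounds:
  assumes R: "R \<in> P0" and Q: "Q \<in> P"
  shows "x_lo R \<le> x_lo (placed R Q)" "x_lo (placed R Q) < x_mid (placed R Q)"
    "x_mid (placed R Q) \<le> x_lo R + slot_width R"
    "y_lo R \<le> y_lo (placed R Q)" "y_lo (placed R Q) < y_hi (placed R Q)"
    "y_hi (placed R Q) \<le> y_hi R" "0 < height (placed R Q)"
proof -
  have w: "0 < slot_width R" and H: "0 < height R" using slot_width_pos[OF R] height_pos[OF R] .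
  note q = probe_bounds[OF Q]
  have a1: "0 \<le> slot_width R * x_lo Q" using w q by simp
  have a2: "slot_width R * x_lo Q < slot_width R * x_mid Q" using w q by simp
  have a3: "slot_width R * x_mid Q \<le> slot_width R"
    using w q mult_left_mono[of "x_mid Q" 1 "slot_width R"] by simp
  have b1: "0 \<le> height R * y_lo Q" using H q by simp
  have b2: "height R * y_lo Q < height R * y_hi Q" using H q by simp
  have b3: "height R * y_hi Q \<le> height R" using H q mult_left_mono[of "y_hi Q" 1 "height R"] by simp
  show "x_lo R \<le> x_lo (placed R Q)" "x_lo (placed R Q) < x_mid (placed R Q)"
    "x_mid (placed R Q) \<le> x_lo R + slot_width R"
    "y_lo R \<le> y_lo (placed R Q)" "y_lo (placed R Q) < y_hi (placed R Q)"
    "y_hi (placed R Q) \<le> y_hi R" "0 < height (placed R Q)"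
    using a1 a2 a3 b1 b2 b3 by (auto simp: placed_def height_def)
qed

lemma placed_apart:
  assumes "R \<in> P0" "R' \<in> P0" "Q \<in> P" "Q' \<in> P" "(R,Q) \<noteq> (R',Q')"
  shows "y_hi (placed R Q) < y_lo (placed R' Q') \<or> y_hi (placed R' Q') < y_lo (placed R Q)"
proof (cases "R = R'")
  case True
  then have "Q \<noteq> Q'" using assms by auto
  then have "y_hi Q < y_lo Q' \<or> y_hi Q' < y_lo Q" using probes_apart assms by auto
  moreover have "0 < height R" using height_pos assms by auto
  ultimately show ?thesis using True by (auto simp: placed_def)
next
  case False
  then have "y_hi R < y_lo R' \<or> y_hi R' < y_lo R" using F0.probes_apart assms by auto
  then show ?thesis using placed_bounds[OF assms(1,3)] placed_bounds[OF assms(2,4)] by auto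
qed

lemma diag_offset_bounds:
  assumes "j < k" "R \<in> P0" "Q \<in> P"
  shows "0 \<le> real j * height (placed R Q) / (48 * real k)"
    "real j * height (placed R Q) / (48 * real k) < height (placed R Q) / 48"
proof -
  have h: "0 < height (placed R Q)" using placed_bounds assms by auto
  show "0 \<le> real j * height (placed R Q) / (48 * real k)" using h by simp
  have "real j * height (placed R Q) < real k * height (placed R Q)" using h assms by simp
  then show "real j * height (placed R Q) / (48 * real k) < height (placed R Q) / 48" using k_pos
    by (simp add: field_simps)
qed

lemma diag_y_bounds:
  assumes "j < k" "R \<in> P0" "Q \<in> P"
  shows "y_lo (placed R Q) + height (placed R Q) / 8 \<le> diag_right_y k R Q j"
    "diag_right_y k R Q j < y_lo (placed R Q) + height (placed R Q) / 8 + height (placed R Q) / 48"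
    "diag_left_y k R Q j = diag_right_y k R Q j + height (placed R Q) / 4"
  using diag_offset_bounds[OF assms] unfolding diag_right_y_def diag_left_y_def by auto

lemma into_slot_mem_rect:
  assumes "R \<in> P0"
  shows "into_slot R q \<in> rect (x_lo R + slot_width R * a) (x_lo R + slot_width R * b)
      (y_lo R + height R * c) (y_lo R + height R * d) \<longleftrightarrow> q \<in> rect a b c d"
  using slot_width_pos[OF assms] height_pos[OF assms]
    by (simp add: into_slot_def axis_affine_def rect_def)

lemma into_slot_unit_square:
  assumes "R \<in> P0" "q \<in> rect 0 1 0 1"
  shows "into_slot R q \<in> rect (x_lo R) (x_lo R + slot_width R) (y_lo R) (y_hi R)"
  using into_slot_mem_rect[OF assms(1), of q 0 1 0 1] assms(2) y_hi_eq[of R] by simp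

lemma into_slot_mem_region:
  assumes "R \<in> P0" "Q \<in> P"
  shows "into_slot R q
      \<in> rect (x_lo (placed R Q)) (x_lo R + slot_width R) (y_lo (placed R Q)) (y_hi (placed R Q))
      \<longleftrightarrow> q \<in> probe_region Q"
  using into_slot_mem_rect[OF assms(1), of q "x_lo Q" 1 "y_lo Q" "y_hi Q"]
    by (simp add: probe_region_def placed_def)

lemma copy_location:
  assumes "R \<in> P0" "s \<in> copy_into R F" "p \<in> s"
  shows "x_lo R \<le> fst p" "fst p \<le> x_lo R + slot_width R" "y_lo R \<le> snd p" "snd p \<le> y_hi R"
proof -
  obtain t where t: "t \<in> F" "s = into_slot R ` t" using assms by (auto simp: copy_into_def)
  then obtain q where q: "q \<in> t" "p = into_slot R q" using assms by auto
  have "q \<in> rect 0 1 0 1" using in_unit_square t q by auto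
  then show "x_lo R \<le> fst p" "fst p \<le> x_lo R + slot_width R" "y_lo R \<le> snd p" "snd p \<le> y_hi R"
    using into_slot_unit_square[OF assms(1)] q by (auto simp: rect_def)
qed

lemma diagonal_location:
  assumes "R \<in> P0" "Q \<in> P" "s \<in> diagonals k R Q" "p \<in> s"
  shows "x_lo (placed R Q) \<le> fst p" "fst p \<le> diag_right_x R"
    "y_lo (placed R Q) + height (placed R Q) / 8 \<le> snd p"
    "snd p \<le> y_lo (placed R Q) + height (placed R Q) * (20/48)"
proof -
  obtain j where j: "j < k" "s = diagonal k R Q j" using assms by (auto simp: diagonals_def)
  note J = diag_offset_bounds[OF j(1) assms(1,2)]
  note N = placed_bounds[OF assms(1,2)]
  have w: "0 < slot_width R" using slot_width_pos assms by auto
  let ?box = "rect (x_lo (placed R Q)) (diag_right_x R)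
    (y_lo (placed R Q) + height (placed R Q) / 8) (y_lo (placed R Q) + height (placed R Q) * (20/48))"
  have "s \<subseteq> ?box"
    unfolding j(2) diagonal_def
  proof (rule closed_segment_subset_rect)
    have "diag_right_y k R Q j
        = y_lo (placed R Q) + height (placed R Q) / 8 + real j * height (placed R Q) / (48 * real k)"
      "diag_left_y k R Q j = diag_right_y k R Q j + height (placed R Q) / 4"
      "diag_right_x R = x_lo R + 3 * slot_width R"
      by (simp_all add: diag_left_y_def diag_right_y_def diag_right_x_def)
    then show "(x_lo (placed R Q), diag_left_y k R Q j) \<in> ?box"
      "(diag_right_x R, diag_right_y k R Q j) \<in> ?box"
      unfolding rect_def mem_Collect_eq fst_conv snd_conv using J N w by linarith+
  qed
  then show "x_lo (placed R Q) \<le> fst p" "fst p \<le> diag_right_x R"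
    "y_lo (placed R Q) + height (placed R Q) / 8 \<le> snd p"
    "snd p \<le> y_lo (placed R Q) + height (placed R Q) * (20/48)"
    using assms(4) by (auto simp: rect_def)
qed

lemma slot_width_le: "R \<in> P0 \<Longrightarrow> x_lo R + 4 * slot_width R \<le> 1"
  using F0.probe_bounds[of R] x_mid_eq[of R] by simp

lemma F0_disjoint_copy:
  assumes "R \<in> P0" "s \<in> F0" "t \<in> copy_into R F"
  shows "s \<inter> t = {}"
proof (rule ccontr)
  assume "s \<inter> t \<noteq> {}"
  then obtain p where p: "p \<in> s" "p \<in> t" by auto
  note L = copy_location[OF assms(1,3) p(2)]
  have w: "0 < slot_width R" using slot_width_pos assms by auto
  have "p \<in> probe_region R" using L slot_width_le[OF assms(1)] w
    by (auto simp: probe_region_def rect_def)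
  then have "s \<in> hitting F0 R" using p assms by (auto simp: hitting_def)
  then have "x_mid R \<le> fst p" using F0.right_of_mid assms p \<open>p \<in> probe_region R\<close> by blast
  then show False using L w x_mid_eq[of R] by linarith
qed

lemma F0_disjoint_diagonal:
  assumes "R \<in> P0" "Q \<in> P" "s \<in> F0" "t \<in> diagonals k R Q"
  shows "s \<inter> t = {}"
proof (rule ccontr)
  assume "s \<inter> t \<noteq> {}"
  then obtain p where p: "p \<in> s" "p \<in> t" by auto
  note L = diagonal_location[OF assms(1,2,4) p(2)]
  note N = placed_bounds[OF assms(1,2)]
  have w: "0 < slot_width R" using slot_width_pos assms by auto
  have "p \<in> probe_region R" unfolding probe_region_def rect_def mem_Collect_eq
    using L N slot_width_le[OF assms(1)] w diag_right_x_def[of R] height_def[of "placed R Q"]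
      by linarith
  then have "s \<in> hitting F0 R" using p assms by (auto simp: hitting_def)
  then have "x_mid R \<le> fst p" using F0.right_of_mid assms p \<open>p \<in> probe_region R\<close> by blast
  then show False using L w x_mid_eq[of R] diag_right_x_def[of R] by linarith
qed

lemma copies_disjoint:
  assumes "R \<in> P0" "R' \<in> P0" "R \<noteq> R'" "t \<in> copy_into R F" "t' \<in> copy_into R' F"
  shows "t \<inter> t' = {}"
proof (rule ccontr)
  assume "t \<inter> t' \<noteq> {}"
  then obtain p where p: "p \<in> t" "p \<in> t'" by auto
  note L = copy_location[OF assms(1,4) p(1)] copy_location[OF assms(2,5) p(2)]
  show False using F0.probes_apart[OF assms(1-3)] L by linarith
qed

lemma copy_disjoint_foreign_diagonal:
  assumes "R \<in> P0" "R' \<in> P0" "Q \<in> P" "R \<noteq> R'" "t \<in> copy_into R' F" "s \<in> diagonals k R Q"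
  shows "t \<inter> s = {}"
proof (rule ccontr)
  assume "t \<inter> s \<noteq> {}"
  then obtain p where p: "p \<in> t" "p \<in> s" by auto
  note L = copy_location[OF assms(2,5) p(1)] diagonal_location[OF assms(1,3,6) p(2)]
  note N = placed_bounds[OF assms(1,3)]
  have "y_lo R \<le> snd p" "snd p \<le> y_hi R" using L(7,8) N(4,5,6,7) height_def[of "placed R Q"]
    by linarith+
  then show False using F0.probes_apart[OF assms(1,2,4)] L(3,4) by linarith
qed

lemma copy_meeting_diagonal:
  assumes "R \<in> P0" "Q \<in> P" "t0 \<in> F" "s \<in> diagonals k R Q" "into_slot R ` t0 \<inter> s \<noteq> {}"
  shows "t0 \<in> hitting F Q"
proof -
  obtain q where q: "q \<in> t0" "into_slot R q \<in> s" using assms(5) by auto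
  have c: "into_slot R ` t0 \<in> copy_into R F" using assms(3) by (auto simp: copy_into_def)
  note L = copy_location[OF assms(1) c imageI[OF q(1)]] diagonal_location[OF assms(1,2,4) q(2)]
  note N = placed_bounds[OF assms(1,2)]
  have "into_slot R q
        \<in> rect (x_lo (placed R Q)) (x_lo R + slot_width R) (y_lo (placed R Q)) (y_hi (placed R Q))"
    unfolding rect_def mem_Collect_eq using L q N height_def[of "placed R Q"]
      by (intro conjI; linarith)
  then have "q \<in> probe_region Q" using into_slot_mem_region[OF assms(1,2)] by blast
  then show ?thesis using q assms(3) by (auto simp: hitting_def)
qed

lemma diagonals_apart_disjoint:
  assumes "R \<in> P0" "R' \<in> P0" "Q \<in> P" "Q' \<in> P" "(R,Q) \<noteq> (R',Q')"
  "s \<in> diagonals k R Q" "s' \<in> diagonals k R' Q'" shows "s \<inter> s' = {}"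
proof (rule ccontr)
  assume "s \<inter> s' \<noteq> {}"
  then obtain p where p: "p \<in> s" "p \<in> s'" by auto
  note L = diagonal_location[OF assms(1,3,6) p(1)] diagonal_location[OF assms(2,4,7) p(2)]
  note N = placed_bounds[OF assms(1,3)] placed_bounds[OF assms(2,4)]
  have "y_lo (placed R Q) \<le> snd p" "snd p \<le> y_hi (placed R Q)"
    using L(3,4) N(5,7) height_def[of "placed R Q"] by linarith+
  moreover have "y_lo (placed R' Q') \<le> snd p" "snd p \<le> y_hi (placed R' Q')"
    using L(7,8) N(12,14) height_def[of "placed R' Q'"] by linarith+
  ultimately show False using placed_apart[OF assms(1-5)] by linarith
qed

lemma distinct_diagonals_disjoint:
  assumes "R \<in> P0" "Q \<in> P" "j < k" "j' < k" "j \<noteq> j'"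
  shows "diagonal k R Q j \<inter> diagonal k R Q j' = {}"
proof (rule ccontr)
  assume "diagonal k R Q j \<inter> diagonal k R Q j' \<noteq> {}"
  then obtain p where p: "p \<in> diagonal k R Q j" "p \<in> diagonal k R Q j'" by auto
  obtain u where u: "fst p = (1-u) * x_lo (placed R Q) + u * diag_right_x R"
    "snd p = (1-u) * diag_left_y k R Q j + u * diag_right_y k R Q j"
    using p(1) unfolding diagonal_def mem_closed_segment_pair by auto
  obtain v where v: "fst p = (1-v) * x_lo (placed R Q) + v * diag_right_x R"
    "snd p = (1-v) * diag_left_y k R Q j' + v * diag_right_y k R Q j'"
    using p(2) unfolding diagonal_def mem_closed_segment_pair by auto
  note N = placed_bounds[OF assms(1,2)]
  have w: "0 < slot_width R" using slot_width_pos assms by auto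
  have d: "diag_right_x R - x_lo (placed R Q) \<noteq> 0" using N w by (simp add: diag_right_x_def)
  have "(u - v) * (diag_right_x R - x_lo (placed R Q)) = 0" using u(1) v(1)
    by (simp add: algebra_simps)
  then have uv: "u = v" using d by simp
  have "diag_right_y k R Q j = diag_right_y k R Q j'" using u(2) v(2) uv
    by (simp add: diag_left_y_def algebra_simps)
  then have "real j * height (placed R Q) = real j' * height (placed R Q)" using k_pos
    by (simp add: diag_right_y_def field_simps)
  then show False using N assms(5) by simp
qed

lemma copy_crosses:
  assumes "R \<in> P0" "Q \<in> P" "t0 \<in> hitting F Q" "y_lo (placed R Q) \<le> Y" "Y \<le> y_hi (placed R Q)"
  shows "\<exists>X. x_mid (placed R Q) \<le> X \<and> X \<le> x_lo R + slot_width R \<and> (X,Y) \<in> into_slot R ` t0"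
proof -
  have H: "0 < height R" and w: "0 < slot_width R" using height_pos slot_width_pos assms by auto
  define y0 where "y0 = (Y - y_lo R) / height R"
  have Y: "Y = y_lo R + height R * y0" using H by (simp add: y0_def)
  have "height R * y_lo Q \<le> height R * y0" using assms(4) Y by (simp add: placed_def)
  then have a: "y_lo Q \<le> y0" using H by simp
  have "height R * y0 \<le> height R * y_hi Q" using assms(5) Y by (simp add: placed_def)
  then have b: "y0 \<le> y_hi Q" using H by simp
  obtain x0 where x0: "x_mid Q \<le> x0" "x0 \<le> 1" "(x0,y0) \<in> t0" using crosses[OF assms(2,3) a b]
    by auto
  have "into_slot R (x0,y0) = (x_lo R + slot_width R * x0, Y)" using Y
    by (simp add: into_slot_def axis_affine_def)
  moreover have "slot_width R * x_mid Q \<le> slot_width R * x0" "slot_width R * x0 \<le> slot_width R"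
    using x0 w mult_left_mono[of x0 1 "slot_width R"] by auto
  ultimately show ?thesis using x0(3)
    by (intro exI[of _ "x_lo R + slot_width R * x0"]) (force simp: placed_def)
qed

lemma copy_segment:
  assumes "R \<in> P0" "t0 \<in> F"
  shows "\<exists>a b. a \<noteq> b \<and> into_slot R ` t0 = closed_segment a b"
proof -
  obtain a b where ab: "a \<noteq> b" "t0 = closed_segment a b" using segment assms by blast
  have "slot_width R \<noteq> 0" "height R \<noteq> 0" using slot_width_pos[OF assms(1)] height_pos[OF assms(1)]
    by auto
  then have "inj (into_slot R)" unfolding into_slot_def by (intro inj_axis_affine)
  then have "into_slot R a \<noteq> into_slot R b" using ab by (meson injD)
  moreover have "into_slot R ` t0 = closed_segment (into_slot R a) (into_slot R b)" using ab
    by (simp add: into_slot_def axis_affine_closed_segment)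
  ultimately show ?thesis by blast
qed

lemma copy_meets_diagonal:
  assumes "R \<in> P0" "Q \<in> P" "t0 \<in> hitting F Q" "j < k"
  shows "into_slot R ` t0 \<inter> diagonal k R Q j \<noteq> {}"
proof -
  note N = placed_bounds[OF assms(1,2)]
  note J = diag_y_bounds[OF assms(4,1,2)]
  have w: "0 < slot_width R" using slot_width_pos assms by auto
  have r1: "y_lo (placed R Q) \<le> diag_left_y k R Q j" "diag_left_y k R Q j \<le> y_hi (placed R Q)"
    using J N height_def[of "placed R Q"] by linarith+
  have r2: "y_lo (placed R Q) \<le> diag_right_y k R Q j" "diag_right_y k R Q j \<le> y_hi (placed R Q)"
    using J N height_def[of "placed R Q"] by linarith+
  obtain Xu where Xu: "x_mid (placed R Q) \<le> Xu" "(Xu, diag_left_y k R Q j) \<in> into_slot R ` t0"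
    using copy_crosses[OF assms(1-3) r1] by auto
  obtain Xv where Xv: "Xv \<le> x_lo R + slot_width R" "(Xv, diag_right_y k R Q j) \<in> into_slot R ` t0"
    using copy_crosses[OF assms(1-3) r2] by auto
  have "x_lo (placed R Q) < Xu" using Xu N by linarith
  moreover have "Xv < diag_right_x R" using Xv w by (simp add: diag_right_x_def)
  ultimately obtain p where p: "p \<in> closed_segment (Xu, diag_left_y k R Q j) (Xv, diag_right_y k R Q j)"
    "p \<in> closed_segment (x_lo (placed R Q), diag_left_y k R Q j) (diag_right_x R, diag_right_y k R Q j)"
    using closed_segments_cross by blast
  have t0F: "t0 \<in> F" using assms(3) by (simp add: hitting_def)
  obtain a b where "into_slot R ` t0 = closed_segment a b" using copy_segment[OF assms(1) t0F]
    by blast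
  then have "convex (into_slot R ` t0)" by simp
  then have "closed_segment (Xu, diag_left_y k R Q j) (Xv, diag_right_y k R Q j) \<subseteq> into_slot R ` t0"
    using Xu(2) Xv(2) by (simp add: closed_segment_subset)
  then show ?thesis using p by (auto simp: diagonal_def)
qed

lemma diagonal_right_of_probe:
  assumes "R \<in> P0" "Q \<in> P" "j < k" "p \<in> diagonal k R Q j"
  "snd p \<le> y_lo (placed R Q) + height (placed R Q) / 8 + height (placed R Q) / 24"
  shows "x_lo R + 5/2 * slot_width R \<le> fst p"
proof -
  obtain u where u: "0 \<le> u" "u \<le> 1" "fst p = (1-u) * x_lo (placed R Q) + u * diag_right_x R"
    "snd p = (1-u) * diag_left_y k R Q j + u * diag_right_y k R Q j"
    using assms(4) unfolding diagonal_def mem_closed_segment_pair by auto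
  note N = placed_bounds[OF assms(1,2)]
  note J = diag_y_bounds[OF assms(3,1,2)]
  have w: "0 < slot_width R" using slot_width_pos assms by auto
  define a where "a = 1 - u"
  have a0: "0 \<le> a" using u by (simp add: a_def)
  have sp: "snd p = diag_right_y k R Q j + a * (height (placed R Q) / 4)" unfolding u(4) J(3) a_def
    by (simp add: algebra_simps)
  have le: "a * (height (placed R Q) / 4) \<le> height (placed R Q) / 24" using sp J(1) assms(5)
    by linarith
  have a6: "a \<le> 1/6"
  proof (rule ccontr)
    assume "\<not> a \<le> 1/6"
    then have "(1/6) * (height (placed R Q) / 4) < a * (height (placed R Q) / 4)" using N(7)
      by (intro mult_strict_right_mono) auto
    then show False using le by linarith
  qed
  have c1: "diag_right_x R - x_lo (placed R Q) \<le> 3 * slot_width R"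
    "0 \<le> diag_right_x R - x_lo (placed R Q)" using N(1,2,3) w diag_right_x_def[of R] by linarith+
  have m: "a * (diag_right_x R - x_lo (placed R Q)) \<le> (1/6) * (3 * slot_width R)"
    by (rule mult_mono) (use a6 c1 in auto)
  have fp: "fst p = diag_right_x R - a * (diag_right_x R - x_lo (placed R Q))" unfolding u(3) a_def
    by (simp add: algebra_simps)
  show ?thesis using fp m diag_right_x_def[of R] by linarith
qed

lemma diagonal_crosses_probe:
  assumes "R \<in> P0" "Q \<in> P" "j < k"
  "y_lo (placed R Q) + height (placed R Q) / 8 + height (placed R Q) / 48 \<le> y"
    "y \<le> y_lo (placed R Q) + height (placed R Q) / 8 + height (placed R Q) / 24"
  shows "\<exists>x. x_lo R + 5/2 * slot_width R \<le> x \<and> x \<le> 1 \<and> (x,y) \<in> diagonal k R Q j"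
proof -
  note N = placed_bounds[OF assms(1,2)]
  note J = diag_y_bounds[OF assms(3,1,2)]
  have w: "0 < slot_width R" using slot_width_pos assms by auto
  define a where "a = 4 * (y - diag_right_y k R Q j) / height (placed R Q)"
  have ya: "y = diag_right_y k R Q j + a * (height (placed R Q) / 4)" using N(7)
    by (simp add: a_def field_simps)
  have "diag_right_y k R Q j \<le> y" using J assms(4) by linarith
  then have a0: "0 \<le> a" using N(7) by (simp add: a_def)
  have "y - diag_right_y k R Q j \<le> height (placed R Q) / 4" using J assms(5) N(7) by linarith
  then have a1: "a \<le> 1" using N(7) by (simp add: a_def field_simps)
  define x where "x = a * x_lo (placed R Q) + (1 - a) * diag_right_x R"
  have ey: "y = (1 - (1-a)) * diag_left_y k R Q j + (1-a) * diag_right_y k R Q j" unfolding ya J(3)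
    by (simp add: algebra_simps)
  have ex: "x = (1 - (1-a)) * x_lo (placed R Q) + (1-a) * diag_right_x R" unfolding x_def by simp
  have mem: "(x,y) \<in> diagonal k R Q j"
    unfolding diagonal_def mem_closed_segment_pair fst_conv snd_conv
    using a0 a1 ey ex by (intro exI[of _ "1 - a"]) simp
  have c1: "x_lo (placed R Q) \<le> diag_right_x R" using N(1,2,3) w diag_right_x_def[of R] by linarith
  have "x \<le> diag_right_x R" unfolding x_def using a0 a1 c1 by (intro convex_bound_le) simp_all
  moreover have "diag_right_x R \<le> 1" using slot_width_le[OF assms(1)] w diag_right_x_def[of R]
    by linarith
  moreover have "x_lo R + 5/2 * slot_width R \<le> x"
    using diagonal_right_of_probe[OF assms(1-3) mem] assms(5) by (simp only: snd_conv fst_conv)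
  ultimately show ?thesis using mem by (intro exI[of _ x]) simp
qed

abbreviation F' where "F' \<equiv> next_family F0 P0 F P k"
abbreviation P' where "P' \<equiv> next_probes P0 P"

lemma mem_next_family: "s \<in> F'
    \<longleftrightarrow> s \<in> F0 \<or> (\<exists>R\<in>P0. s \<in> copy_into R F) \<or> (\<exists>R\<in>P0. \<exists>Q\<in>P. s \<in> diagonals k R Q)"
  by (auto simp: next_family_def)

lemma copy_in_strip:
  assumes "R \<in> P0" "R' \<in> P0" "s \<in> copy_into R' F" "p \<in> s" "y_lo R \<le> snd p" "snd p \<le> y_hi R"
  shows "R' = R"
proof (rule ccontr)
  assume "R' \<noteq> R"
  then have "y_hi R < y_lo R' \<or> y_hi R' < y_lo R" using F0.probes_apart assms(1,2) by auto
  moreover note copy_location[OF assms(2,3,4)]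
  ultimately show False using assms(5,6) by linarith
qed

lemma diagonal_in_strip:
  assumes "R \<in> P0" "Q \<in> P" "R' \<in> P0" "Q' \<in> P" "s \<in> diagonals k R' Q'" "p \<in> s"
  "y_lo (placed R Q) \<le> snd p" "snd p \<le> y_hi (placed R Q)"
  shows "R' = R \<and> Q' = Q"
proof (rule ccontr)
  assume "\<not> (R' = R \<and> Q' = Q)"
  then have "(R,Q) \<noteq> (R',Q')" by auto
  then have "y_hi (placed R Q) < y_lo (placed R' Q') \<or> y_hi (placed R' Q') < y_lo (placed R Q)"
    using placed_apart assms(1-4) by blast
  moreover note L = diagonal_location[OF assms(3,4,5,6)]
  moreover note N = placed_bounds[OF assms(3,4)]
  ultimately show False using assms(7,8) height_def[of "placed R' Q'"] by linarith
qed

lemma hitting_upper_probe_subset: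
  assumes R: "R \<in> P0" and Q: "Q \<in> P"
  shows "hitting F' (upper_probe R Q) \<subseteq> hitting F0 R \<union> copy_into R (hitting F Q)"
proof
  note N = placed_bounds[OF R Q]
  fix s assume "s \<in> hitting F' (upper_probe R Q)"
  then obtain p where s: "s \<in> F'" and p: "p \<in> s" "p \<in> probe_region (upper_probe R Q)"
    by (auto simp: hitting_def)
  have pr: "x_lo (placed R Q) \<le> fst p" "fst p \<le> 1"
    "y_lo (placed R Q) + height (placed R Q) / 2 \<le> snd p" "snd p \<le> y_hi (placed R Q)"
    using p(2) mem_region_upper by auto
  consider "s \<in> F0" | R' where "R' \<in> P0" "s \<in> copy_into R' F" | R' Q' where "R' \<in> P0" "Q' \<in> P"
    "s \<in> diagonals k R' Q'"
    using s mem_next_family by blast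
  then show "s \<in> hitting F0 R \<union> copy_into R (hitting F Q)"
  proof cases
    case 1
    have "p \<in> probe_region R" unfolding mem_probe_region using pr N height_def[of "placed R Q"]
      by (intro conjI; linarith)
    then show ?thesis using 1 p by (auto simp: hitting_def)
  next
    case 2
    have "R' = R" using copy_in_strip[OF R 2 p(1)] pr N height_def[of "placed R Q"] by linarith
    then obtain t0 where t0: "t0 \<in> F" "s = into_slot R ` t0" using 2 by (auto simp: copy_into_def)
    then obtain q where q: "q \<in> t0" "p = into_slot R q" using p by auto
    have c: "s \<in> copy_into R F" using 2 \<open>R' = R\<close> by simp
    note L = copy_location[OF R c p(1)]
    have "into_slot R q
        \<in> rect (x_lo (placed R Q)) (x_lo R + slot_width R) (y_lo (placed R Q)) (y_hi (placed R Q))"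
      unfolding rect_def mem_Collect_eq q(2)[symmetric] using L pr N height_def[of "placed R Q"]
        by (intro conjI; linarith)
    then have "q \<in> probe_region Q" using into_slot_mem_region[OF R Q] by blast
    then have "t0 \<in> hitting F Q" using t0 q by (auto simp: hitting_def)
    then show ?thesis using t0 by (auto simp: copy_into_def)
  next
    case 3
    have "R' = R \<and> Q' = Q" using diagonal_in_strip[OF R Q 3 p(1)] pr N height_def[of "placed R Q"]
      by linarith
    then have "s \<in> diagonals k R Q" using 3 by simp
    from diagonal_location[OF R Q this p(1)] have False using pr N height_def[of "placed R Q"]
      by linarith
    then show ?thesis ..
  qed
qed

lemma subset_hitting_upper_probe:
  assumes R: "R \<in> P0" and Q: "Q \<in> P"
  shows "hitting F0 R \<union> copy_into R (hitting F Q) \<subseteq> hitting F' (upper_probe R Q)"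
proof
  note N = placed_bounds[OF R Q]
  have w: "0 < slot_width R" using slot_width_pos R by auto
  have wl: "x_lo R + 4 * slot_width R \<le> 1" using slot_width_le R by auto
  fix s assume s: "s \<in> hitting F0 R \<union> copy_into R (hitting F Q)"
  then consider "s \<in> hitting F0 R" | t0 where "t0 \<in> hitting F Q" "s = into_slot R ` t0"
    by (auto simp: copy_into_def)
  then show "s \<in> hitting F' (upper_probe R Q)"
  proof cases
    case 1
    have y: "y_lo R \<le> y_hi (placed R Q)" "y_hi (placed R Q) \<le> y_hi R" using N by linarith+
    obtain x where x: "x_mid R \<le> x" "x \<le> 1" "(x, y_hi (placed R Q)) \<in> s" using F0.crosses[OF R 1 y]
      by blast
    have "(x, y_hi (placed R Q)) \<in> probe_region (upper_probe R Q)"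
      unfolding mem_region_upper fst_conv snd_conv
      using x N x_mid_eq[of R] w height_def[of "placed R Q"] by (intro conjI; linarith)
    moreover have "s \<in> F'" using 1 by (auto simp: hitting_def next_family_def)
    ultimately show ?thesis using x(3) by (auto simp: hitting_def)
  next
    case 2
    have y: "y_lo (placed R Q) \<le> y_hi (placed R Q)" "y_hi (placed R Q) \<le> y_hi (placed R Q)" using N
      by linarith+
    obtain X where X: "x_mid (placed R Q) \<le> X" "X \<le> x_lo R + slot_width R"
      "(X, y_hi (placed R Q)) \<in> into_slot R ` t0"
      using copy_crosses[OF R Q 2(1) y] by blast
    have "(X, y_hi (placed R Q)) \<in> probe_region (upper_probe R Q)"
      unfolding mem_region_upper fst_conv snd_conv
      using X N wl w height_def[of "placed R Q"] by (intro conjI; linarith)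
    moreover have "s \<in> F'" using 2 R by (auto simp: hitting_def next_family_def copy_into_def)
    ultimately show ?thesis using X(3) 2(2) by (auto simp: hitting_def)
  qed
qed

lemma hitting_upper_probe:
  "R \<in> P0 \<Longrightarrow> Q \<in> P \<Longrightarrow> hitting F' (upper_probe R Q) = hitting F0 R \<union> copy_into R (hitting F Q)"
  by (intro equalityI hitting_upper_probe_subset subset_hitting_upper_probe)

lemma hitting_diagonal_probe_subset:
  assumes R: "R \<in> P0" and Q: "Q \<in> P"
  shows "hitting F' (diagonal_probe R Q) \<subseteq> hitting F0 R \<union> diagonals k R Q"
proof
  note N = placed_bounds[OF R Q]
  have w: "0 < slot_width R" using slot_width_pos R by auto
  fix s assume "s \<in> hitting F' (diagonal_probe R Q)"
  then obtain p where s: "s \<in> F'" and p: "p \<in> s" "p \<in> probe_region (diagonal_probe R Q)"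
    by (auto simp: hitting_def)
  have pr: "x_lo R + 2 * slot_width R \<le> fst p" "fst p \<le> 1"
    "y_lo (placed R Q) + height (placed R Q) / 8 + height (placed R Q) / 48 \<le> snd p"
     "snd p \<le> y_lo (placed R Q) + height (placed R Q) / 8 + height (placed R Q) / 24"
    using p(2) mem_region_diagonal by auto
  consider "s \<in> F0" | R' where "R' \<in> P0" "s \<in> copy_into R' F" | R' Q' where "R' \<in> P0" "Q' \<in> P"
    "s \<in> diagonals k R' Q'"
    using s mem_next_family by blast
  then show "s \<in> hitting F0 R \<union> diagonals k R Q"
  proof cases
    case 1
    have "p \<in> probe_region R" unfolding mem_probe_region using pr N w height_def[of "placed R Q"]
      by (intro conjI; linarith)
    then show ?thesis using 1 p by (auto simp: hitting_def)
  next
    case 2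
    have "R' = R" using copy_in_strip[OF R 2 p(1)] pr N height_def[of "placed R Q"] by linarith
    then have c: "s \<in> copy_into R F" using 2 by simp
    from copy_location[OF R c p(1)] have False using pr w by linarith
    then show ?thesis ..
  next
    case 3
    have "R' = R \<and> Q' = Q" using diagonal_in_strip[OF R Q 3 p(1)] pr N height_def[of "placed R Q"]
      by linarith
    then show ?thesis using 3 by simp
  qed
qed

lemma subset_hitting_diagonal_probe:
  assumes R: "R \<in> P0" and Q: "Q \<in> P"
  shows "hitting F0 R \<union> diagonals k R Q \<subseteq> hitting F' (diagonal_probe R Q)"
proof
  note N = placed_bounds[OF R Q]
  have w: "0 < slot_width R" using slot_width_pos R by auto
  fix s assume s: "s \<in> hitting F0 R \<union> diagonals k R Q"
  then consider "s \<in> hitting F0 R" | j where "j < k" "s = diagonal k R Q j"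
    by (auto simp: diagonals_def)
  then show "s \<in> hitting F' (diagonal_probe R Q)"
  proof cases
    case 1
    have y: "y_lo R \<le> y_lo (diagonal_probe R Q)" "y_lo (diagonal_probe R Q) \<le> y_hi R"
      using N height_def[of "placed R Q"] unfolding diagonal_probe_def probe.simps by linarith+
    obtain x where x: "x_mid R \<le> x" "x \<le> 1" "(x, y_lo (diagonal_probe R Q)) \<in> s"
      using F0.crosses[OF R 1 y] by blast
    have "(x, y_lo (diagonal_probe R Q)) \<in> probe_region (diagonal_probe R Q)"
      using x N x_mid_eq[of R] w by (simp add: mem_region_diagonal) (simp add: diagonal_probe_def)
    moreover have "s \<in> F'" using 1 by (auto simp: hitting_def next_family_def)
    ultimately show ?thesis using x(3) by (auto simp: hitting_def)
  next
    case 2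
    have y: "y_lo (placed R Q) + height (placed R Q) / 8 + height (placed R Q) / 48
        \<le> y_lo (diagonal_probe R Q)"
      "y_lo (diagonal_probe R Q)
        \<le> y_lo (placed R Q) + height (placed R Q) / 8 + height (placed R Q) / 24"
      using N by (simp_all add: diagonal_probe_def)
    obtain x where x: "x_lo R + 5/2 * slot_width R \<le> x" "x \<le> 1"
      "(x, y_lo (diagonal_probe R Q)) \<in> diagonal k R Q j"
      using diagonal_crosses_probe[OF R Q 2(1) y] by blast
    have "(x, y_lo (diagonal_probe R Q)) \<in> probe_region (diagonal_probe R Q)"
      using x w N by (simp add: mem_region_diagonal) (simp add: diagonal_probe_def)
    moreover have "s \<in> F'" using 2 R Q by (auto simp: next_family_def diagonals_def)
    ultimately show ?thesis using x(3) 2(2) by (auto simp: hitting_def)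
  qed
qed

lemma hitting_diagonal_probe:
  "R \<in> P0 \<Longrightarrow> Q \<in> P \<Longrightarrow> hitting F' (diagonal_probe R Q) = hitting F0 R \<union> diagonals k R Q"
  by (intro equalityI hitting_diagonal_probe_subset subset_hitting_diagonal_probe)

lemma inj_into_slot: "R \<in> P0 \<Longrightarrow> inj (into_slot R)"
proof -
  assume R: "R \<in> P0"
  have "slot_width R \<noteq> 0" "height R \<noteq> 0" using slot_width_pos[OF R] height_pos[OF R] by auto
  then show "inj (into_slot R)" unfolding into_slot_def by (intro inj_axis_affine)
qed

lemma pairwise_disjnt_copy: "R \<in> P0 \<Longrightarrow> pairwise disjnt G \<Longrightarrow> pairwise disjnt (copy_into R G)"
  unfolding copy_into_def by (simp add: pairwise_disjnt_image_iff[OF inj_into_slot])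

lemma mem_next_probes: "Z \<in> P' \<longleftrightarrow> (\<exists>R\<in>P0. \<exists>Q\<in>P. Z = upper_probe R Q \<or> Z = diagonal_probe R Q)"
  by (auto simp: next_probes_def image_iff)

lemma new_probe_in_placed:
  assumes "R \<in> P0" "Q \<in> P" "Z = upper_probe R Q \<or> Z = diagonal_probe R Q"
  shows "y_lo (placed R Q) \<le> y_lo Z" "y_hi Z \<le> y_hi (placed R Q)" "y_lo Z < y_hi Z"
proof -
  note N = placed_bounds[OF assms(1,2)]
  have "y_lo (placed R Q) \<le> y_lo (upper_probe R Q) \<and> y_hi (upper_probe R Q) \<le> y_hi (placed R Q) \<and>
      y_lo (upper_probe R Q) < y_hi (upper_probe R Q)"
    "y_lo (placed R Q) \<le> y_lo (diagonal_probe R Q) \<and> y_hi (diagonal_probe R Q) \<le> y_hi (placed R Q) \<and>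
      y_lo (diagonal_probe R Q) < y_hi (diagonal_probe R Q)"
    unfolding upper_probe_def diagonal_probe_def probe.simps using N height_def[of "placed R Q"]
    by (intro conjI; linarith)+
  then show "y_lo (placed R Q) \<le> y_lo Z" "y_hi Z \<le> y_hi (placed R Q)" "y_lo Z < y_hi Z"
    using assms(3) by auto
qed

lemma next_probe_bounds:
  assumes "Z \<in> P'"
  shows "0 \<le> x_lo Z \<and> x_lo Z < x_mid Z \<and> x_mid Z \<le> 1 \<and> 0 \<le> y_lo Z \<and> y_lo Z < y_hi Z \<and> y_hi Z \<le> 1"
proof -
  obtain R Q where RQ: "R \<in> P0" "Q \<in> P" "Z = upper_probe R Q \<or> Z = diagonal_probe R Q"
    using assms mem_next_probes by blast
  note N = placed_bounds[OF RQ(1,2)]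
  note B = F0.probe_bounds[OF RQ(1)]
  have w: "0 < slot_width R" using slot_width_pos RQ by auto
  have wl: "x_lo R + 4 * slot_width R \<le> 1" using slot_width_le RQ by auto
  note I = new_probe_in_placed[OF RQ]
  have "0 \<le> x_lo Z \<and> x_lo Z < x_mid Z \<and> x_mid Z \<le> 1"
    using RQ(3) N B w wl by (auto simp: upper_probe_def diagonal_probe_def)
  moreover have "0 \<le> y_lo Z" "y_hi Z \<le> 1" using I N B by linarith+
  ultimately show ?thesis using I by blast
qed

lemma next_probes_apart:
  assumes "Z \<in> P'" "Z' \<in> P'" "Z \<noteq> Z'"
  shows "y_hi Z < y_lo Z' \<or> y_hi Z' < y_lo Z"
proof -
  obtain R Q where RQ: "R \<in> P0" "Q \<in> P" "Z = upper_probe R Q \<or> Z = diagonal_probe R Q"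
    using assms mem_next_probes by blast
  obtain R' Q' where RQ': "R' \<in> P0" "Q' \<in> P" "Z' = upper_probe R' Q' \<or> Z' = diagonal_probe R' Q'"
    using assms mem_next_probes by blast
  note I = new_probe_in_placed[OF RQ] and I' = new_probe_in_placed[OF RQ']
  show ?thesis
  proof (cases "(R,Q) = (R',Q')")
    case True
    then have "R = R'" "Q = Q'" by auto
    note N = placed_bounds[OF RQ(1,2)]
    have "y_hi (diagonal_probe R Q) < y_lo (upper_probe R Q)" using N
      by (simp add: upper_probe_def diagonal_probe_def)
    then show ?thesis using RQ(3) RQ'(3) \<open>R = R'\<close> \<open>Q = Q'\<close> assms(3) by auto
  next
    case False
    then show ?thesis using placed_apart[OF RQ(1) RQ'(1) RQ(2) RQ'(2) False] I I' by linarith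
  qed
qed

lemma upper_probe_crosses:
  assumes R: "R \<in> P0" and Q: "Q \<in> P" and s: "s \<in> hitting F' (upper_probe R Q)"
    and y: "y_lo (upper_probe R Q) \<le> y" "y \<le> y_hi (upper_probe R Q)"
  shows "\<exists>x. x_mid (upper_probe R Q) \<le> x \<and> x \<le> 1 \<and> (x, y) \<in> s"
proof -
  note N = placed_bounds[OF R Q]
  have w: "0 < slot_width R" using slot_width_pos R by auto
  have y': "y_lo (placed R Q) \<le> y" "y \<le> y_hi (placed R Q)"
    using y N by (auto simp: upper_probe_def)
  consider "s \<in> hitting F0 R" | t where "t \<in> hitting F Q" "s = into_slot R ` t"
    using s hitting_upper_probe[OF R Q] by (auto simp: copy_into_def)
  then show ?thesis
  proof cases
    case 1
    have "y_lo R \<le> y" "y \<le> y_hi R" using y' N by linarith+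
    with F0.crosses[OF R 1] obtain x where "x_mid R \<le> x" "x \<le> 1" "(x, y) \<in> s" by blast
    then show ?thesis using N x_mid_eq[of R] w by (intro exI[of _ x]) (auto simp: upper_probe_def)
  next
    case 2
    obtain x where "x_mid (placed R Q) \<le> x" "x \<le> x_lo R + slot_width R" "(x, y) \<in> s"
      using copy_crosses[OF R Q 2(1) y'] 2(2) by blast
    then show ?thesis using slot_width_le[OF R] w
      by (intro exI[of _ x]) (auto simp: upper_probe_def)
  qed
qed

lemma diagonal_probe_crosses:
  assumes R: "R \<in> P0" and Q: "Q \<in> P" and s: "s \<in> hitting F' (diagonal_probe R Q)"
    and y: "y_lo (diagonal_probe R Q) \<le> y" "y \<le> y_hi (diagonal_probe R Q)"
  shows "\<exists>x. x_mid (diagonal_probe R Q) \<le> x \<and> x \<le> 1 \<and> (x, y) \<in> s"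
proof -
  have w: "0 < slot_width R" using slot_width_pos R by auto
  consider "s \<in> hitting F0 R" | j where "j < k" "s = diagonal k R Q j"
    using s hitting_diagonal_probe[OF R Q] by (auto simp: diagonals_def)
  then show ?thesis
  proof cases
    case 1
    have "y_lo R \<le> y" "y \<le> y_hi R"
      using y new_probe_in_placed[OF R Q disjI2[OF refl]] placed_bounds[OF R Q] by linarith+
    with F0.crosses[OF R 1] obtain x where "x_mid R \<le> x" "x \<le> 1" "(x, y) \<in> s" by blast
    then show ?thesis using x_mid_eq[of R] w by (intro exI[of _ x]) (auto simp: diagonal_probe_def)
  next
    case 2
    have "y_lo (placed R Q) + height (placed R Q) / 8 + height (placed R Q) / 48 \<le> y"
      "y \<le> y_lo (placed R Q) + height (placed R Q) / 8 + height (placed R Q) / 24"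
      using y by (simp_all add: diagonal_probe_def)
    from diagonal_crosses_probe[OF R Q 2(1) this] show ?thesis using 2(2)
      by (simp add: diagonal_probe_def)
  qed
qed

lemma next_crosses:
  assumes "Z \<in> P'" "s \<in> hitting F' Z" "y_lo Z \<le> y" "y \<le> y_hi Z"
  shows "\<exists>x. x_mid Z \<le> x \<and> x \<le> 1 \<and> (x, y) \<in> s"
proof -
  obtain R Q where "R \<in> P0" "Q \<in> P" "Z = upper_probe R Q \<or> Z = diagonal_probe R Q"
    using assms(1) mem_next_probes by blast
  then show ?thesis using assms(2-4) upper_probe_crosses diagonal_probe_crosses by blast
qed

lemma upper_probe_right_of_mid:
  assumes R: "R \<in> P0" and Q: "Q \<in> P" and s: "s \<in> hitting F' (upper_probe R Q)"
    and p: "p \<in> s" "p \<in> probe_region (upper_probe R Q)"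
  shows "x_mid (upper_probe R Q) \<le> fst p"
proof -
  note N = placed_bounds[OF R Q]
  have w: "0 < slot_width R" using slot_width_pos R by auto
  have pr: "x_lo (placed R Q) \<le> fst p" "fst p \<le> 1"
    "y_lo (placed R Q) + height (placed R Q) / 2 \<le> snd p" "snd p \<le> y_hi (placed R Q)"
    using p(2) mem_region_upper by auto
  consider "s \<in> hitting F0 R" | t where "t \<in> hitting F Q" "s = into_slot R ` t"
    using s hitting_upper_probe[OF R Q] by (auto simp: copy_into_def)
  then show ?thesis
  proof cases
    case 1
    have "p \<in> probe_region R"
      unfolding mem_probe_region using pr N height_def[of "placed R Q"] by (intro conjI; linarith)
    then have "x_mid R \<le> fst p" using F0.right_of_mid[OF R 1 p(1)] by blast
    then show ?thesis using N x_mid_eq[of R] w by (simp add: upper_probe_def)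
  next
    case 2
    then obtain q where q: "q \<in> t" "p = into_slot R q" using p(1) by auto
    have "s \<in> copy_into R F" using 2 by (auto simp: copy_into_def hitting_def)
    note L = copy_location[OF R this p(1)]
    have "into_slot R q
        \<in> rect (x_lo (placed R Q)) (x_lo R + slot_width R) (y_lo (placed R Q)) (y_hi (placed R Q))"
      unfolding rect_def mem_Collect_eq q(2)[symmetric]
      using L pr N height_def[of "placed R Q"] by (intro conjI; linarith)
    then have "q \<in> probe_region Q" using into_slot_mem_region[OF R Q] by blast
    then have "x_mid Q \<le> fst q" using right_of_mid[OF Q 2(1) q(1)] by blast
    then have "slot_width R * x_mid Q \<le> slot_width R * fst q" using w by simp
    moreover have "fst p = x_lo R + slot_width R * fst q" using q(2)
      by (simp add: into_slot_def axis_affine_def)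
    ultimately show ?thesis by (simp add: upper_probe_def placed_def)
  qed
qed

lemma diagonal_probe_right_of_mid:
  assumes R: "R \<in> P0" and Q: "Q \<in> P" and s: "s \<in> hitting F' (diagonal_probe R Q)"
    and p: "p \<in> s" "p \<in> probe_region (diagonal_probe R Q)"
  shows "x_mid (diagonal_probe R Q) \<le> fst p"
proof -
  have w: "0 < slot_width R" using slot_width_pos R by auto
  have pr: "x_lo R + 2 * slot_width R \<le> fst p" "fst p \<le> 1"
    "y_lo (placed R Q) + height (placed R Q) / 8 + height (placed R Q) / 48 \<le> snd p"
    "snd p \<le> y_lo (placed R Q) + height (placed R Q) / 8 + height (placed R Q) / 24"
    using p(2) mem_region_diagonal by auto
  consider "s \<in> hitting F0 R" | j where "j < k" "s = diagonal k R Q j"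
    using s hitting_diagonal_probe[OF R Q] by (auto simp: diagonals_def)
  then show ?thesis
  proof cases
    case 1
    have "p \<in> probe_region R"
      unfolding mem_probe_region using pr placed_bounds[OF R Q] w height_def[of "placed R Q"]
      by (intro conjI; linarith)
    then have "x_mid R \<le> fst p" using F0.right_of_mid[OF R 1 p(1)] by blast
    then show ?thesis using x_mid_eq[of R] w by (simp add: diagonal_probe_def)
  next
    case 2
    then show ?thesis
      using diagonal_right_of_probe[OF R Q 2(1), of p] p(1) pr(4) by (simp add: diagonal_probe_def)
  qed
qed

lemma next_right_of_mid:
  assumes "Z \<in> P'" "s \<in> hitting F' Z" "p \<in> s" "p \<in> probe_region Z"
  shows "x_mid Z \<le> fst p"
proof -
  obtain R Q where "R \<in> P0" "Q \<in> P" "Z = upper_probe R Q \<or> Z = diagonal_probe R Q"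
    using assms(1) mem_next_probes by blast
  then show ?thesis using assms(2-4) upper_probe_right_of_mid diagonal_probe_right_of_mid by blast
qed

lemma next_hitting_disjoint:
  assumes "Z \<in> P'"
  shows "pairwise disjnt (hitting F' Z)"
proof -
  obtain R Q where RQ: "R \<in> P0" "Q \<in> P" "Z = upper_probe R Q \<or> Z = diagonal_probe R Q"
    using assms mem_next_probes by blast
  show ?thesis
  proof (cases "Z = upper_probe R Q")
    case True
    have "pairwise disjnt (hitting F0 R \<union> copy_into R (hitting F Q))"
    proof (rule pairwise_disjnt_Un)
      show "pairwise disjnt (hitting F0 R)" using F0.hitting_disjoint RQ by auto
      show "pairwise disjnt (copy_into R (hitting F Q))"
        using pairwise_disjnt_copy[OF RQ(1) hitting_disjoint[OF RQ(2)]] .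
      show "\<forall>a\<in>hitting F0 R. \<forall>b\<in>copy_into R (hitting F Q). a \<inter> b = {}"
        using F0_disjoint_copy[OF RQ(1)] by (auto simp: hitting_def copy_into_def)
    qed
    then show ?thesis using True hitting_upper_probe[OF RQ(1,2)] by simp
  next
    case False
    then have Z2: "Z = diagonal_probe R Q" using RQ(3) by simp
    have "pairwise disjnt (hitting F0 R \<union> diagonals k R Q)"
    proof (rule pairwise_disjnt_Un)
      show "pairwise disjnt (hitting F0 R)" using F0.hitting_disjoint RQ by auto
      show "pairwise disjnt (diagonals k R Q)" unfolding pairwise_def disjnt_def diagonals_def
        using distinct_diagonals_disjoint[OF RQ(1,2)] by blast
      show "\<forall>a\<in>hitting F0 R. \<forall>b\<in>diagonals k R Q. a \<inter> b = {}"
        using F0_disjoint_diagonal[OF RQ(1,2)] by (auto simp: hitting_def)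
    qed
    then show ?thesis using Z2 hitting_diagonal_probe[OF RQ(1,2)] by simp
  qed
qed

lemma next_family_nonempty: "s \<in> F' \<Longrightarrow> s \<noteq> {}"
proof -
  assume "s \<in> F'"
  then consider "s \<in> F0" | R where "R \<in> P0" "s \<in> copy_into R F" | R Q where "R \<in> P0" "Q \<in> P"
    "s \<in> diagonals k R Q"
    using mem_next_family by blast
  then show "s \<noteq> {}"
  proof cases
    case 1 then show ?thesis using F0.segment by blast
  next
    case 2
    then obtain t where t: "t \<in> F" "s = into_slot R ` t" by (auto simp: copy_into_def)
    then obtain a b where "t = closed_segment a b" using segment by blast
    then show ?thesis using t by auto
  next
    case 3 then show ?thesis by (auto simp: diagonals_def diagonal_def)
  qed
qed

lemma next_family_parts: "F0 \<subseteq> F'" "R \<in> P0 \<Longrightarrow> copy_into R F \<subseteq> F'"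
  "R \<in> P0 \<Longrightarrow> Q \<in> P \<Longrightarrow> diagonals k R Q \<subseteq> F'"
  by (auto simp: next_family_def)

lemma F0_inter_copy:
  assumes "R \<in> P0"
  shows "F0 \<inter> copy_into R F = {}"
proof (rule disjoint_families)
  show "s \<inter> t = {}" if "s \<in> F0" "t \<in> copy_into R F" for s t using F0_disjoint_copy[OF assms that] .
  show "{} \<notin> F0" using next_family_nonempty next_family_parts(1) by blast
qed

lemma F0_inter_diagonals:
  assumes "R \<in> P0" "Q \<in> P"
  shows "F0 \<inter> diagonals k R Q = {}"
proof (rule disjoint_families)
  show "s \<inter> t = {}" if "s \<in> F0" "t \<in> diagonals k R Q" for s t
    using F0_disjoint_diagonal[OF assms that] .
  show "{} \<notin> F0" using next_family_nonempty next_family_parts(1) by blast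
qed

lemma copies_inter:
  assumes "R \<in> P0" "R' \<in> P0" "R \<noteq> R'"
  shows "copy_into R F \<inter> copy_into R' F = {}"
proof (rule disjoint_families)
  show "s \<inter> t = {}" if "s \<in> copy_into R F" "t \<in> copy_into R' F" for s t
    using copies_disjoint[OF assms that] .
  show "{} \<notin> copy_into R F" using next_family_nonempty next_family_parts(2)[OF assms(1)] by blast
qed

lemma diagonals_inter:
  assumes "R \<in> P0" "R' \<in> P0" "Q \<in> P" "Q' \<in> P" "(R, Q) \<noteq> (R', Q')"
  shows "diagonals k R Q \<inter> diagonals k R' Q' = {}"
proof (rule disjoint_families)
  show "s \<inter> t = {}" if "s \<in> diagonals k R Q" "t \<in> diagonals k R' Q'" for s t
    using diagonals_apart_disjoint[OF assms that] .
  show "{} \<notin> diagonals k R Q" using next_family_nonempty next_family_parts(3)[OF assms(1,3)]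
    by blast
qed

lemma copy_inter_diagonals:
  assumes "R \<in> P0" "R' \<in> P0" "Q \<in> P"
  shows "copy_into R' F \<inter> diagonals k R Q = {}"
proof (cases "R = R'")
  case False
  show ?thesis
  proof (rule disjoint_families)
    show "s \<inter> t = {}" if "s \<in> copy_into R' F" "t \<in> diagonals k R Q" for s t
      using copy_disjoint_foreign_diagonal[OF assms(1,2,3) _ that] False by blast
    show "{} \<notin> copy_into R' F" using next_family_nonempty next_family_parts(2)[OF assms(2)] by blast
  qed
next
  case True
  show ?thesis
  proof (rule ccontr)
    assume "copy_into R' F \<inter> diagonals k R Q \<noteq> {}"
    then obtain s where s: "s \<in> copy_into R F" "s \<in> diagonals k R Q" using True by auto
    then obtain j where j: "s = diagonal k R Q j" by (auto simp: diagonals_def)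
    have "(diag_right_x R, diag_right_y k R Q j) \<in> s" unfolding j diagonal_def by simp
    from copy_location(2)[OF assms(1) s(1) this] have "diag_right_x R \<le> x_lo R + slot_width R"
      by simp
    then show False using slot_width_pos[OF assms(1)] by (simp add: diag_right_x_def)
  qed
qed

lemma next_in_unit_square: "s \<in> F' \<Longrightarrow> s \<subseteq> rect 0 1 0 1"
proof -
  assume "s \<in> F'"
  then consider "s \<in> F0" | R where "R \<in> P0" "s \<in> copy_into R F" | R Q where "R \<in> P0" "Q \<in> P"
    "s \<in> diagonals k R Q"
    using mem_next_family by blast
  then show "s \<subseteq> rect 0 1 0 1"
  proof cases
    case 1 then show ?thesis using F0.in_unit_square by blast
  next
    case 2
    show ?thesis
    proof
      fix p assume p: "p \<in> s"
      note L = copy_location[OF 2 p]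
      have "0 \<le> x_lo R" "0 \<le> y_lo R" "y_hi R \<le> 1" using F0.probe_bounds[OF 2(1)] by auto
      moreover have "x_lo R + 4 * slot_width R \<le> 1" "0 < slot_width R"
        using slot_width_le slot_width_pos 2 by auto
      ultimately show "p \<in> rect 0 1 0 1" unfolding rect_def mem_Collect_eq using L
        by (intro conjI; linarith)
    qed
  next
    case 3
    show ?thesis
    proof
      fix p assume p: "p \<in> s"
      note L = diagonal_location[OF 3 p]
      note N = placed_bounds[OF 3(1,2)]
      have "0 \<le> x_lo R" "0 \<le> y_lo R" "y_hi R \<le> 1" using F0.probe_bounds[OF 3(1)] by auto
      moreover have "x_lo R + 4 * slot_width R \<le> 1" "0 < slot_width R"
        using slot_width_le slot_width_pos 3 by auto
      ultimately show "p \<in> rect 0 1 0 1" unfolding rect_def mem_Collect_eq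
        using L N diag_right_x_def[of R] height_def[of "placed R Q"] by (intro conjI; linarith)
    qed
  qed
qed

lemma next_segment: "s \<in> F' \<Longrightarrow> \<exists>a b. a \<noteq> b \<and> s = closed_segment a b"
proof -
  assume "s \<in> F'"
  then consider "s \<in> F0" | R where "R \<in> P0" "s \<in> copy_into R F" | R Q where "R \<in> P0" "Q \<in> P"
    "s \<in> diagonals k R Q"
    using mem_next_family by blast
  then show ?thesis
  proof cases
    case 1 then show ?thesis using F0.segment by blast
  next
    case 2
    then obtain t where t: "t \<in> F" "s = into_slot R ` t" unfolding copy_into_def by blast
    show ?thesis using copy_segment[OF 2(1) t(1)] t(2) by simp
  next
    case 3
    then obtain j where j: "s = diagonal k R Q j" by (auto simp: diagonals_def)
    have "x_lo (placed R Q) < diag_right_x R"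
      using placed_bounds[OF 3(1,2)] slot_width_pos[OF 3(1)] diag_right_x_def[of R] by linarith
    then have "(x_lo (placed R Q), diag_left_y k R Q j) \<noteq> (diag_right_x R, diag_right_y k R Q j)"
      by auto
    then show ?thesis unfolding j diagonal_def by blast
  qed
qed

lemma card_copy_into: "R \<in> P0 \<Longrightarrow> card (copy_into R F) = card F"
  unfolding copy_into_def
    by (rule card_image) (auto simp: inj_on_def inj_image_eq_iff[OF inj_into_slot])

lemma card_diagonals:
  assumes "R \<in> P0" "Q \<in> P"
  shows "card (diagonals k R Q) = k"
proof -
  have "inj_on (diagonal k R Q) {..<k}"
  proof (rule inj_onI)
    fix i j assume ij: "i \<in> {..<k}" "j \<in> {..<k}" "diagonal k R Q i = diagonal k R Q j"
    show "i = j"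
    proof (rule ccontr)
      assume "i \<noteq> j"
      then have "diagonal k R Q i \<inter> diagonal k R Q j = {}" using distinct_diagonals_disjoint[OF assms] ij
        by auto
      moreover have "diagonal k R Q i \<noteq> {}" by (auto simp: diagonal_def)
      ultimately show False using ij(3) by auto
    qed
  qed
  then show ?thesis by (simp add: diagonals_def card_image)
qed

lemma finite_diagonals: "finite (diagonals k R Q)" by (simp add: diagonals_def)
lemma finite_copy_into: "finite (copy_into R F)" using finite_parts by (simp add: copy_into_def)

lemma card_next_family: "card F' = card F0 + card P0 * card F + card P0 * card P * k"
proof -
  define A where "A = (\<Union>R\<in>P0. copy_into R F)"
  define B where "B = (\<Union>(R, Q)\<in>P0 \<times> P. diagonals k R Q)"
  have F'_eq: "F' = F0 \<union> A \<union> B" by (simp add: next_family_def A_def B_def)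
  have card_A: "card A = card P0 * card F"
  proof -
    have "card A = (\<Sum>R\<in>P0. card (copy_into R F))" unfolding A_def
      using finite_parts finite_copy_into copies_inter by (intro card_UN_disjoint) auto
    also have "\<dots> = (\<Sum>R\<in>P0. card F)" using card_copy_into by simp
    finally show ?thesis by simp
  qed
  have card_B: "card B = card P0 * card P * k"
  proof -
    have "card B = (\<Sum>x\<in>P0 \<times> P. card (case_prod (diagonals k) x))" unfolding B_def
      by (rule card_UN_disjoint) (use finite_parts finite_diagonals diagonals_inter in auto)
    also have "\<dots> = (\<Sum>x\<in>P0 \<times> P. k)" using card_diagonals by (intro sum.cong) auto
    finally show ?thesis using finite_parts by (simp add: card_cartesian_product)
  qed
  have "F0 \<inter> A = {}" unfolding A_def using F0_inter_copy by blast
  moreover have "(F0 \<union> A) \<inter> B = {}"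
    unfolding A_def B_def using F0_inter_diagonals copy_inter_diagonals by (auto simp: disjoint_iff)
  moreover have "finite A" "finite B"
    unfolding A_def B_def using finite_parts finite_copy_into finite_diagonals by auto
  ultimately have "card F' = card F0 + card A + card B"
    unfolding F'_eq using finite_parts by (simp add: card_Un_disjoint)
  then show ?thesis using card_A card_B by simp
qed

lemma new_probes_disjoint:
  assumes "R \<in> P0" "Q \<in> P" "R' \<in> P0" "Q' \<in> P" "(R, Q) \<noteq> (R', Q')"
  shows "{upper_probe R Q, diagonal_probe R Q} \<inter> {upper_probe R' Q', diagonal_probe R' Q'} = {}"
proof (rule equals0I)
  fix Z
  assume "Z \<in> {upper_probe R Q, diagonal_probe R Q} \<inter> {upper_probe R' Q', diagonal_probe R' Q'}"
  then have "Z = upper_probe R Q \<or> Z = diagonal_probe R Q"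
    "Z = upper_probe R' Q' \<or> Z = diagonal_probe R' Q'"
    by auto
  from new_probe_in_placed[OF assms(1,2) this(1)] new_probe_in_placed[OF assms(3,4) this(2)]
  show False using placed_apart[OF assms(1,3,2,4,5)] by linarith
qed

lemma upper_probe_ne_diagonal_probe: "R \<in> P0 \<Longrightarrow> Q \<in> P \<Longrightarrow> upper_probe R Q \<noteq> diagonal_probe R Q"
  using placed_bounds[of R Q] by (auto simp: upper_probe_def diagonal_probe_def)

lemma inj_upper_probe: "inj_on (case_prod upper_probe) (P0 \<times> P)"
proof (rule inj_onI)
  fix x y assume "x \<in> P0 \<times> P" "y \<in> P0 \<times> P" "case_prod upper_probe x = case_prod upper_probe y"
  moreover obtain R Q R' Q' where "x = (R, Q)" "y = (R', Q')" by (cases x, cases y)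
  ultimately show "x = y" using new_probes_disjoint[of R Q R' Q'] by auto
qed

lemma inj_diagonal_probe: "inj_on (case_prod diagonal_probe) (P0 \<times> P)"
proof (rule inj_onI)
  fix x y assume "x \<in> P0 \<times> P" "y \<in> P0 \<times> P" "case_prod diagonal_probe x = case_prod diagonal_probe y"
  moreover obtain R Q R' Q' where "x = (R, Q)" "y = (R', Q')" by (cases x, cases y)
  ultimately show "x = y" using new_probes_disjoint[of R Q R' Q'] by auto
qed

lemma upper_probes_disjoint_diagonal_probes:
  "case_prod upper_probe ` (P0 \<times> P) \<inter> case_prod diagonal_probe ` (P0 \<times> P) = {}"
proof (rule equals0I)
  fix Z assume "Z \<in> case_prod upper_probe ` (P0 \<times> P) \<inter> case_prod diagonal_probe ` (P0 \<times> P)"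
  then obtain R Q R' Q' where "R \<in> P0" "Q \<in> P" "R' \<in> P0" "Q' \<in> P"
    "Z = upper_probe R Q" "Z = diagonal_probe R' Q'" by auto
  then show False
    using new_probes_disjoint[of R Q R' Q'] upper_probe_ne_diagonal_probe[of R Q]
      by (cases "(R, Q) = (R', Q')") auto
qed

lemma card_next_probes: "card P' = 2 * card P0 * card P"
proof -
  have "card P'
      = card (case_prod upper_probe ` (P0 \<times> P)) + card (case_prod diagonal_probe ` (P0 \<times> P))"
    unfolding next_probes_def
    using finite_parts upper_probes_disjoint_diagonal_probes by (intro card_Un_disjoint) auto
  also have "\<dots> = card (P0 \<times> P) + card (P0 \<times> P)"
    using inj_upper_probe inj_diagonal_probe by (simp add: card_image)
  finally show ?thesis by (simp add: card_cartesian_product)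
qed

lemma next_card_F: "2 * card F' = (Suc n + 2) * k * card P'"
proof -
  have "2 * card F' = 2 * card F0 + card P0 * (2 * card F) + 2 * (card P0 * card P * k)"
    using card_next_family by (simp add: algebra_simps)
  also have "\<dots> = (n + 2) * (card P * k) * card P0 + card P0 * ((n + 2) * k * card P)
      + 2 * (card P0 * card P * k)"
    using F0.card_F card_F by simp
  also have "\<dots> = (Suc n + 2) * k * (2 * card P0 * card P)" by (simp add: algebra_simps)
  finally show ?thesis using card_next_probes by simp
qed

lemma neighbour_of_F0:
  assumes "x \<in> F0" "y \<in> F'" "x \<inter> y \<noteq> {}"
  shows "y \<in> F0"
proof -
  consider "y \<in> F0" | R where "R \<in> P0" "y \<in> copy_into R F" | R Q where "R \<in> P0" "Q \<in> P"
    "y \<in> diagonals k R Q"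
    using assms(2) mem_next_family by blast
  then show ?thesis
  proof cases
    case 1 then show ?thesis .
  next
    case 2 then show ?thesis using F0_disjoint_copy[OF 2(1) assms(1) 2(2)] assms(3) by blast
  next
    case 3 then show ?thesis using F0_disjoint_diagonal[OF 3(1,2) assms(1) 3(3)] assms(3) by blast
  qed
qed

lemma neighbour_of_diagonal:
  assumes R: "R \<in> P0" and Q: "Q \<in> P" and x: "x \<in> diagonals k R Q" and "y \<in> F'" "x \<noteq> y" "x \<inter> y \<noteq> {}"
  shows "y \<in> copy_into R (hitting F Q)"
proof -
  consider "y \<in> F0" | R' where "R' \<in> P0" "y \<in> copy_into R' F" | R' Q' where "R' \<in> P0" "Q' \<in> P"
    "y \<in> diagonals k R' Q'"
    using assms(4) mem_next_family by blast
  then show ?thesis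
  proof cases
    case 1 then show ?thesis using F0_disjoint_diagonal[OF R Q 1 x] assms(6) by blast
  next
    case 2
    show ?thesis
    proof (cases "R' = R")
      case False
      then show ?thesis using copy_disjoint_foreign_diagonal[OF R 2(1) Q _ 2(2) x] assms(6) by blast
    next
      case True
      obtain t0 where t0: "t0 \<in> F" "y = into_slot R ` t0" using 2 True by (auto simp: copy_into_def)
      have "into_slot R ` t0 \<inter> x \<noteq> {}" using assms(6) t0(2) by blast
      then have "t0 \<in> hitting F Q" using copy_meeting_diagonal[OF R Q t0(1) x] by blast
      then show ?thesis using t0(2) by (simp add: copy_into_def)
    qed
  next
    case 3
    show ?thesis
    proof (cases "(R,Q) = (R',Q')")
      case False
      then show ?thesis using diagonals_apart_disjoint[OF R 3(1) Q 3(2) False x 3(3)] assms(6) by blast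
    next
      case True
      then have y: "y \<in> diagonals k R Q" using 3 by simp
      obtain i j where ij: "i < k" "j < k" "x = diagonal k R Q i" "y = diagonal k R Q j" using x y
        by (auto simp: diagonals_def)
      then have "i \<noteq> j" using assms(5) by auto
      then show ?thesis using distinct_diagonals_disjoint[OF R Q ij(1,2)] ij(3,4) assms(6) by blast
    qed
  qed
qed

lemma neighbour_of_copy:
  assumes R: "R \<in> P0" and x: "x \<in> copy_into R F" and y: "y \<in> F'" "x \<inter> y \<noteq> {}"
  and noS: "\<not> (\<exists>R'\<in>P0. \<exists>Q'\<in>P. y \<in> diagonals k R' Q')"
  shows "y \<in> copy_into R F"
proof -
  consider "y \<in> F0" | R' where "R' \<in> P0" "y \<in> copy_into R' F" | R' Q' where "R' \<in> P0" "Q' \<in> P"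
    "y \<in> diagonals k R' Q'"
    using y(1) mem_next_family by blast
  then show ?thesis
  proof cases
    case 1 then show ?thesis using F0_disjoint_copy[OF R 1 x] y(2) by blast
  next
    case 2
    show ?thesis
    proof (cases "R = R'")
      case True then show ?thesis using 2 by simp
    next
      case False then show ?thesis using copies_disjoint[OF R 2(1) False x 2(2)] y(2) by blast
    qed
  next
    case 3 then show ?thesis using noS by blast
  qed
qed

lemma no_triangle_through_diagonal:
  assumes "x \<in> diagonals k R Q" "R \<in> P0" "Q \<in> P" "y \<in> F'" "z \<in> F'" "x \<noteq> y" "x \<noteq> z" "y \<noteq> z"
  "x \<inter> y \<noteq> {}" "x \<inter> z \<noteq> {}" "y \<inter> z \<noteq> {}" shows False
proof -
  have "y \<in> copy_into R (hitting F Q)" "z \<in> copy_into R (hitting F Q)"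
    using neighbour_of_diagonal[OF assms(2,3,1)] assms by blast+
  moreover have "pairwise disjnt (copy_into R (hitting F Q))"
    using pairwise_disjnt_copy[OF assms(2) hitting_disjoint[OF assms(3)]] .
  ultimately show False using assms(8,11) unfolding pairwise_def disjnt_def by blast
qed

lemma triangle_free_copy_into: "R \<in> P0 \<Longrightarrow> triangle_free (copy_into R F)"
  unfolding copy_into_def by (rule triangle_free_image[OF inj_into_slot triangle_free])

lemma next_triangle_free: "triangle_free F'"
  unfolding triangle_free_def
proof clarify
  fix x y z assume m: "x \<in> F'" "y \<in> F'" "z \<in> F'" and d: "x \<noteq> y" "y \<noteq> z" "x \<noteq> z"
    and i: "x \<inter> y \<noteq> {}" "y \<inter> z \<noteq> {}" "x \<inter> z \<noteq> {}"
  have i': "y \<inter> x \<noteq> {}" "z \<inter> y \<noteq> {}" "z \<inter> x \<noteq> {}" using i by blast+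
  show False
  proof (cases "\<exists>R\<in>P0. \<exists>Q\<in>P. x \<in> diagonals k R Q \<or> y \<in> diagonals k R Q \<or> z \<in> diagonals k R Q")
    case True
    then obtain R Q where RQ: "R \<in> P0" "Q \<in> P"
      and "x \<in> diagonals k R Q \<or> y \<in> diagonals k R Q \<or> z \<in> diagonals k R Q" by blast
    then consider "x \<in> diagonals k R Q" | "y \<in> diagonals k R Q" | "z \<in> diagonals k R Q" by blast
    then show False
    proof cases
      case 1 show False by (rule no_triangle_through_diagonal[OF 1 RQ m(2,3)]) (use d i i' in auto)
    next
      case 2 show False by (rule no_triangle_through_diagonal[OF 2 RQ m(1,3)]) (use d i i' in auto)
    next
      case 3 show False by (rule no_triangle_through_diagonal[OF 3 RQ m(1,2)]) (use d i i' in auto)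
    qed
  next
    case False
    then have no_diag: "\<not> (\<exists>R\<in>P0. \<exists>Q\<in>P. w \<in> diagonals k R Q)" if "w \<in> {x, y, z}" for w
      using that by blast
    consider "x \<in> F0" | R where "R \<in> P0" "x \<in> copy_into R F"
      using m(1) no_diag[of x] unfolding mem_next_family by auto
    then show False
    proof cases
      case 1
      then have "y \<in> F0" "z \<in> F0" using neighbour_of_F0 m i by blast+
      then show False using F0.triangle_free 1 d i unfolding triangle_free_def by blast
    next
      case 2
      then have "y \<in> copy_into R F" "z \<in> copy_into R F"
        using neighbour_of_copy[OF 2 m(2) i(1) no_diag[of y]]
          neighbour_of_copy[OF 2 m(3) i(3) no_diag[of z]]
        by auto
      then show False using triangle_free_copy_into[OF 2(1)] 2(2) d i unfolding triangle_free_def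
        by blast
    qed
  qed
qed

lemma finite_next_family: "finite F'"
  using finite_parts finite_copy_into finite_diagonals by (simp add: next_family_def)

lemma independent_split:
  assumes "I \<subseteq> F'"
  shows "card I \<le> card (I \<inter> F0) + (\<Sum>R\<in>P0. card (I \<inter> copy_into R F))
    + (\<Sum>x\<in>P0 \<times> P. card (I \<inter> diagonals k (fst x) (snd x)))"
proof -
  let ?C = "\<Union>R\<in>P0. I \<inter> copy_into R F" and ?D = "\<Union>x\<in>P0 \<times> P. I \<inter> diagonals k (fst x) (snd x)"
  have "I \<subseteq> (I \<inter> F0) \<union> ?C \<union> ?D"
  proof
    fix s assume s: "s \<in> I"
    then consider "s \<in> F0" | R where "R \<in> P0" "s \<in> copy_into R F" | R Q where "R \<in> P0" "Q \<in> P"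
      "s \<in> diagonals k R Q"
      using assms mem_next_family by blast
    then show "s \<in> (I \<inter> F0) \<union> ?C \<union> ?D"
    proof cases
      case 3
      then have "(R, Q) \<in> P0 \<times> P" "s \<in> I \<inter> diagonals k (fst (R, Q)) (snd (R, Q))" using s by auto
      then show ?thesis by blast
    qed (use s in blast)+
  qed
  moreover have "finite ((I \<inter> F0) \<union> ?C \<union> ?D)"
    using finite_parts finite_copy_into finite_diagonals by auto
  ultimately have "card I \<le> card ((I \<inter> F0) \<union> ?C \<union> ?D)"
    by (rule card_mono[rotated])
  also have "\<dots> \<le> card (I \<inter> F0) + card ?C + card ?D"
    by (meson card_Un_le add_right_mono order_trans)
  also have "\<dots> \<le> card (I \<inter> F0) + (\<Sum>R\<in>P0. card (I \<inter> copy_into R F))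
      + (\<Sum>x\<in>P0 \<times> P. card (I \<inter> diagonals k (fst x) (snd x)))"
    using finite_parts by (intro add_mono card_UN_le) auto
  finally show ?thesis .
qed

lemma card_F0_part:
  assumes "pairwise disjnt I"
  shows "card (I \<inter> F0) \<le> k * card {x \<in> P0 \<times> P. hitting F0 (fst x) \<inter> I \<noteq> {}}"
proof -
  have "{R\<in>P0. hitting F0 R \<inter> (I \<inter> F0) \<noteq> {}} = {R\<in>P0. hitting F0 R \<inter> I \<noteq> {}}"
    by (auto simp: hitting_def)
  then have "card (I \<inter> F0) \<le> card P * k * card {R\<in>P0. hitting F0 R \<inter> I \<noteq> {}}"
    using F0.independent_bound[of "I \<inter> F0"] pairwise_subset[OF assms] by auto
  moreover have "{x \<in> P0 \<times> P. hitting F0 (fst x) \<inter> I \<noteq> {}} = {R\<in>P0. hitting F0 R \<inter> I \<noteq> {}} \<times> P"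
    by auto
  ultimately show ?thesis by (simp add: card_cartesian_product algebra_simps)
qed

lemma card_copy_part:
  assumes "R \<in> P0" "pairwise disjnt I"
  shows "card (I \<inter> copy_into R F) \<le> k * card {Q\<in>P. copy_into R (hitting F Q) \<inter> I \<noteq> {}}"
proof -
  define J where "J = {t\<in>F. into_slot R ` t \<in> I}"
  have inj: "inj ((`) (into_slot R))"
    using inj_into_slot[OF assms(1)] by (simp add: inj_image_eq_iff inj_on_def)
  have "I \<inter> copy_into R F = copy_into R J"
    by (auto simp: J_def copy_into_def)
  then have "card (I \<inter> copy_into R F) = card J"
    by (simp add: copy_into_def card_image inj_on_subset[OF inj])
  moreover have "pairwise disjnt J"
  proof -
    have "copy_into R J \<subseteq> I" by (auto simp: J_def copy_into_def)
    then show ?thesis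
      using pairwise_subset[OF assms(2)] pairwise_disjnt_image_iff[OF inj_into_slot[OF assms(1)]]
      by (auto simp: copy_into_def)
  qed
  then have "card J \<le> k * card {Q\<in>P. hitting F Q \<inter> J \<noteq> {}}"
    by (intro independent_bound) (auto simp: J_def)
  moreover have "hitting F Q \<inter> J \<noteq> {} \<longleftrightarrow> copy_into R (hitting F Q) \<inter> I \<noteq> {}" for Q
    by (auto simp: J_def copy_into_def hitting_def)
  ultimately show ?thesis by simp
qed

lemma card_copies_part:
  assumes "pairwise disjnt I"
  shows "(\<Sum>R\<in>P0. card (I \<inter> copy_into R F))
    \<le> k * card {x \<in> P0 \<times> P. copy_into (fst x) (hitting F (snd x)) \<inter> I \<noteq> {}}"
proof -
  have "(\<Sum>R\<in>P0. card (I \<inter> copy_into R F))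
      \<le> (\<Sum>R\<in>P0. k * card {Q\<in>P. copy_into R (hitting F Q) \<inter> I \<noteq> {}})"
    using card_copy_part[OF _ assms] by (intro sum_mono)
  also have "\<dots> = k * card (SIGMA R:P0. {Q\<in>P. copy_into R (hitting F Q) \<inter> I \<noteq> {}})"
    using finite_parts by (simp add: sum_distrib_left card_SigmaI)
  also have "(SIGMA R:P0. {Q\<in>P. copy_into R (hitting F Q) \<inter> I \<noteq> {}})
      = {x \<in> P0 \<times> P. copy_into (fst x) (hitting F (snd x)) \<inter> I \<noteq> {}}"
    by auto
  finally show ?thesis .
qed

lemma card_diagonals_part:
  "(\<Sum>x\<in>P0 \<times> P. card (I \<inter> diagonals k (fst x) (snd x)))
    \<le> k * card {x \<in> P0 \<times> P. diagonals k (fst x) (snd x) \<inter> I \<noteq> {}}"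
proof -
  have "(\<Sum>x\<in>P0 \<times> P. card (I \<inter> diagonals k (fst x) (snd x)))
      \<le> (\<Sum>x\<in>P0 \<times> P. if diagonals k (fst x) (snd x) \<inter> I \<noteq> {} then k else 0)"
  proof (rule sum_mono)
    fix x assume "x \<in> P0 \<times> P"
    then have "card (diagonals k (fst x) (snd x)) = k" by (intro card_diagonals) auto
    moreover have "card (I \<inter> diagonals k (fst x) (snd x)) \<le> card (diagonals k (fst x) (snd x))"
      by (intro card_mono finite_diagonals) auto
    ultimately show "card (I \<inter> diagonals k (fst x) (snd x))
        \<le> (if diagonals k (fst x) (snd x) \<inter> I \<noteq> {} then k else 0)"
      by (auto simp: Int_commute)
  qed
  also have "\<dots> = k * card {x \<in> P0 \<times> P. diagonals k (fst x) (snd x) \<inter> I \<noteq> {}}"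
    using finite_parts by (simp add: sum.If_cases Int_def)
  finally show ?thesis .
qed

text \<open>Every diagonal of \<open>placed R Q\<close> crosses every copied segment hitting \<open>Q\<close>.\<close>
lemma independent_diagonal_excludes_copy:
  assumes "R \<in> P0" "Q \<in> P" "pairwise disjnt I" "diagonals k R Q \<inter> I \<noteq> {}"
  shows "copy_into R (hitting F Q) \<inter> I = {}"
proof (rule ccontr)
  assume "copy_into R (hitting F Q) \<inter> I \<noteq> {}"
  then obtain t where t: "t \<in> hitting F Q" "into_slot R ` t \<in> I" by (auto simp: copy_into_def)
  obtain j where j: "j < k" "diagonal k R Q j \<in> I" using assms(4) by (auto simp: diagonals_def)
  have "into_slot R ` t \<noteq> diagonal k R Q j"
    using copy_inter_diagonals[OF assms(1,1,2)] t(1) j(1)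
    by (auto simp: copy_into_def hitting_def diagonals_def)
  then show False
    using assms(3) t(2) j(2) copy_meets_diagonal[OF assms(1,2) t(1) j(1)]
    by (auto simp: pairwise_def disjnt_def)
qed

lemma card_next_probes_filter:
  "card {Z\<in>P'. \<phi> Z} = card {x \<in> P0 \<times> P. \<phi> (case_prod upper_probe x)}
    + card {x \<in> P0 \<times> P. \<phi> (case_prod diagonal_probe x)}"
proof -
  let ?U = "{x \<in> P0 \<times> P. \<phi> (case_prod upper_probe x)}"
    and ?D = "{x \<in> P0 \<times> P. \<phi> (case_prod diagonal_probe x)}"
  have "{Z\<in>P'. \<phi> Z} = case_prod upper_probe ` ?U \<union> case_prod diagonal_probe ` ?D"
    by (auto simp: next_probes_def)
  moreover have "case_prod upper_probe ` ?U \<inter> case_prod diagonal_probe ` ?D = {}"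
    using upper_probes_disjoint_diagonal_probes by blast
  moreover have "card (case_prod upper_probe ` ?U) = card ?U"
    "card (case_prod diagonal_probe ` ?D) = card ?D"
    by (auto intro!: card_image inj_on_subset[OF inj_upper_probe]
        inj_on_subset[OF inj_diagonal_probe])
  ultimately show ?thesis using finite_parts by (simp add: card_Un_disjoint)
qed

lemma next_independent_bound:
  assumes "I \<subseteq> F'" "pairwise disjnt I"
  shows "card I \<le> k * card {Z\<in>P'. hitting F' Z \<inter> I \<noteq> {}}"
proof -
  define A where "A x \<longleftrightarrow> hitting F0 (fst x) \<inter> I \<noteq> {}" for x :: "probe \<times> probe"
  define B where "B x \<longleftrightarrow> copy_into (fst x) (hitting F (snd x)) \<inter> I \<noteq> {}" for x :: "probe \<times> probe"
  define C where "C x \<longleftrightarrow> diagonals k (fst x) (snd x) \<inter> I \<noteq> {}" for x :: "probe \<times> probe"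
  have "card I \<le> k * card {x \<in> P0 \<times> P. A x} + k * card {x \<in> P0 \<times> P. B x}
      + k * card {x \<in> P0 \<times> P. C x}"
    using independent_split[OF assms(1)] card_F0_part[OF assms(2)] card_copies_part[OF assms(2)]
      card_diagonals_part[of I]
    unfolding A_def B_def C_def by linarith
  also have "\<dots> = k * (card {x \<in> P0 \<times> P. A x} + card {x \<in> P0 \<times> P. B x} + card {x \<in> P0 \<times> P. C x})"
    by (simp add: algebra_simps)
  also have "\<dots> \<le> k * (card {x \<in> P0 \<times> P. A x \<or> B x} + card {x \<in> P0 \<times> P. A x \<or> C x})"
  proof (intro mult_le_mono2 card_filter_add_le)
    show "finite (P0 \<times> P)" using finite_parts by simp
    show "\<not> B x" if "x \<in> P0 \<times> P" "C x" for x
      using that independent_diagonal_excludes_copy[OF _ _ assms(2), of "fst x" "snd x"]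
      unfolding B_def C_def by (simp add: mem_Times_iff)
  qed
  also have "\<dots> = k * card {Z\<in>P'. hitting F' Z \<inter> I \<noteq> {}}"
    using hitting_upper_probe hitting_diagonal_probe
    by (auto simp: card_next_probes_filter A_def B_def C_def Int_Un_distrib2
        intro!: arg_cong2[where f = "(+)"] arg_cong[where f = card])
  finally show ?thesis .
qed

lemma next_probed_family: "probed_family F' P' k (Suc n)"
proof
  show "finite F'" by (rule finite_next_family)
  show "finite P'" using finite_parts by (simp add: next_probes_def)
  show "P' \<noteq> {}" using finite_parts mem_next_probes by blast
qed (use next_segment next_in_unit_square next_triangle_free next_probe_bounds next_probes_apart
    next_crosses next_right_of_mid next_hitting_disjoint next_card_F next_independent_bound in auto)

end

lemma probed_family_exists: "0 < k \<Longrightarrow> \<exists>F P. probed_family F P k n"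
proof (induction n arbitrary: k)
  case 0
  then show ?case using probed_family_level_0 by blast
next
  case (Suc n)
  then obtain F P where FP: "probed_family F P k n" by blast
  then have "0 < card P * k"
    using Suc.prems by (simp add: probed_family.finite_P probed_family.P_nonempty card_gt_0_iff)
  then obtain F0 P0 where F0P0: "probed_family F0 P0 (card P * k) n" using Suc.IH by blast
  interpret probed_step F0 P0 F P k n
    using F0P0 FP Suc.prems by (simp add: probed_step_def probed_step_axioms_def)
  show ?case using next_probed_family by blast
qed

lemma (in probed_family) family_nonempty: "0 < k \<Longrightarrow> F \<noteq> {}"
  using card_F finite_P P_nonempty by (auto simp: card_gt_0_iff)

lemma (in probed_family) independent_card_le:
  assumes "I \<subseteq> F" "pairwise disjnt I"
  shows "real (card I) \<le> 2 / (real n + 2) * real (card F)"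
proof -
  have "card {Z\<in>P. hitting F Z \<inter> I \<noteq> {}} \<le> card P"
    using finite_P by (intro card_mono) auto
  then have "card I \<le> k * card P"
    using independent_bound[OF assms] by (meson le_trans mult_le_mono2)
  then have "real (card I) \<le> real (k * card P)" by linarith
  also have "\<dots> = 2 / (real n + 2) * real (card F)"
    using arg_cong[OF card_F, of real] by (simp add: field_simps)
  finally show ?thesis .
qed

definition vec2 :: "pt \<Rightarrow> real^2" where
  "vec2 p = (\<chi> i. if i = 1 then fst p else snd p)"

lemma linear_vec2: "linear vec2"
  by (rule linearI) (simp_all add: vec2_def vec_eq_iff)

lemma inj_vec2: "inj vec2"
proof (rule injI)
  fix p q assume "vec2 p = vec2 q"
  then have "vec2 p $ 1 = vec2 q $ 1" "vec2 p $ 2 = vec2 q $ 2" by simp_all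
  then show "p = q" by (simp add: vec2_def prod_eq_iff)
qed

lemma is_segment_vec2_image: "a \<noteq> b \<Longrightarrow> is_segment (vec2 ` closed_segment a b)"
  unfolding is_segment_def closed_segment_linear_image[OF linear_vec2, symmetric]
  using inj_vec2 by (auto dest: injD)

lemma triangle_free_ig_iff: "triangle_free_ig S \<longleftrightarrow> triangle_free S"
  unfolding triangle_free_ig_def triangle_free_def seg_adj_def by auto

lemma independent_ig_iff: "independent_ig S I \<longleftrightarrow> I \<subseteq> S \<and> pairwise disjnt I"
  unfolding independent_ig_def seg_adj_def pairwise_def disjnt_def by auto

lemma independent_in_image:
  assumes "inj f" "I \<subseteq> (`) f ` F" "pairwise disjnt I"
  obtains I0 where "I0 \<subseteq> F" "pairwise disjnt I0" "card I = card I0"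
proof -
  obtain I0 where I0: "I0 \<subseteq> F" "I = (`) f ` I0" using assms(2) by (auto simp: subset_image_iff)
  have "inj ((`) f)" using assms(1) by (simp add: inj_def inj_image_eq_iff)
  then show ?thesis
    using that I0 assms(3) pairwise_disjnt_image_iff[OF assms(1)]
      by (simp add: card_image inj_on_subset)
qed

lemma (in probed_family) plane_segment_family:
  assumes "0 < k"
  shows "\<exists>S :: (real^2) set set. finite S \<and> S \<noteq> {} \<and> (\<forall>s\<in>S. is_segment s) \<and> triangle_free_ig S \<and>
           (\<forall>I. independent_ig S I \<longrightarrow> real (card I) \<le> 2 / (real n + 2) * real (card S))"
proof -
  define S where "S = (`) vec2 ` F"
  have card_S: "card S = card F" unfolding S_def using inj_vec2
    by (simp add: card_image inj_on_def inj_image_eq_iff)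
  have "finite S" "S \<noteq> {}" using finite_F family_nonempty[OF assms] by (auto simp: S_def)
  moreover have "is_segment s" if s: "s \<in> S" for s
  proof -
    obtain t where "t \<in> F" "s = vec2 ` t" using s unfolding S_def by blast
    moreover obtain a b where "a \<noteq> b" "t = closed_segment a b" using segment \<open>t \<in> F\<close> by blast
    ultimately show ?thesis using is_segment_vec2_image by simp
  qed
  moreover have "triangle_free_ig S"
    unfolding triangle_free_ig_iff S_def by (rule triangle_free_image[OF inj_vec2 triangle_free])
  moreover have "real (card I) \<le> 2 / (real n + 2) * real (card S)" if indep: "independent_ig S I"
    for I
  proof -
    have "I \<subseteq> (`) vec2 ` F" "pairwise disjnt I" using indep by (auto simp: independent_ig_iff S_def)
    then obtain I0 where "I0 \<subseteq> F" "pairwise disjnt I0" "card I = card I0"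
      by (rule independent_in_image[OF inj_vec2])
    then show ?thesis using independent_card_le card_S by simp
  qed
  ultimately show ?thesis by blast
qed

theorem mainTheorem1:
  fixes \<epsilon> :: real
  assumes "\<epsilon> > 0"
  shows "\<exists>S :: (real^2) set set. finite S \<and> S \<noteq> {} \<and> (\<forall>s\<in>S. is_segment s) \<and>
           triangle_free_ig S \<and>
           (\<forall>I. independent_ig S I \<longrightarrow> real (card I) \<le> \<epsilon> * real (card S))"
proof -
  obtain n :: nat where "2 / \<epsilon> \<le> real n" using real_arch_simple by blast
  then have ratio: "2 / (real n + 2) \<le> \<epsilon>" using assms by (simp add: field_simps)
  obtain F P where "probed_family F P 1 n" using probed_family_exists[of 1 n] by auto
  then obtain S :: "(real^2) set set" where "finite S" "S \<noteq> {}" "\<forall>s\<in>S. is_segment s"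
    "triangle_free_ig S"
    and indep: "\<forall>I. independent_ig S I \<longrightarrow> real (card I) \<le> 2 / (real n + 2) * real (card S)"
    using probed_family.plane_segment_family[of F P 1 n] by auto
  moreover have "real (card I) \<le> \<epsilon> * real (card S)" if "independent_ig S I" for I
    using indep that mult_right_mono[OF ratio, of "real (card S)"] by fastforce
  ultimately show ?thesis by blast
qed

end
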